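(* Let $\omega\in\widehat{\mathcal D}$, $N\in\mathbb N$, $\alpha>0$ and $\mu=\omega\,\widehat\omega^{\alpha-1}$. Let $K=K(\omega)>1$ be such that $\{M_n\}_{n=0}^\infty$ is lacunary, and let $\{P_n\}_{n=0}^\infty$ be polynomials such that $f=\sum_{n=0}^\infty P_n\ast f$ for all $f\in\mathcal H(\mathbb D)$ and $\widehat{P_n}(j)=0$ for $j\notin[M_{n-1},M_{n+N})$ (with $M_{-1}=0$). Then for every admissible Banach space $X$, $$\|I^\mu(P_n\ast g)\|_X\asymp\mu_{M_n}\|P_n\ast g\|_X\asymp K^{-\alpha n}\|P_n\ast g\|_X,\qquad n\in\mathbb N\cup\{0\},\ g\in\mathcal H(\mathbb D),$$ with constants independent of $n$ and $g$.
   Context: A radial weight is a nonnegative $\omega\in L^1([0,1))$; $\widehat\omega(r)=\int_r^1\omega(s)ds>0$. $\omega\in\widehat{\mathcal D}$ means $\widehat\omega(r)\le C\widehat\omega(\frac{1+r}2)$ for some $C>0$ and all $0\le r<1$. $\mu_x=\int_0^1r^x\mu(r)dr$. For $K>1$, $r_n=\inf\{r\in[0,1):\widehat\omega(r)=\widehat\omega(0)K^{-n}\}$ and $M_n=E(\frac1{1-r_n})$ ($E$ = integer part); lacunary means $M_{n+1}\ge CM_n$ for some $C>1$ and all $n$. Hadamard product: $(f\ast g)(z)=\sum_k\widehat f(k)\widehat g(k)z^k$. For a radial weight $\mu$, $I^\mu g(z)=\sum_{n\ge0}\widehat g(n)\mu_{2n+1}z^n$. A quasi-normed space $X\subset\mathcal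 H(\mathbb D)$ is admissible if (1) convergence in $X$ implies uniform convergence on compact subsets of $\mathbb D$; (2) for each $r>1$, uniform convergence on compact subsets of $\{|z|<r\}$ implies convergence in $X$; (3) there is $C>0$ with $\|f_\zeta\|_X\le C\|f\|_X$ for all $f\in X$, $\zeta\in\overline{\mathbb D}$, where $f_\zeta(z)=f(\zeta z)$. *)

theory Defs
  imports "HOL-Complex_Analysis.Complex_Analysis" "HOL-Computational_Algebra.Polynomial"
begin

definition radial_weight :: "(real \<Rightarrow> real) \<Rightarrow> bool" where
  "radial_weight w \<longleftrightarrow> (\<forall>r\<in>{0..<1}. 0 \<le> w r) \<and> set_integrable lborel {0..<1::real} w"

definition omega_hat :: "(real \<Rightarrow> real) \<Rightarrow> real \<Rightarrow> real" where
  "omega_hat w r = (LBINT s:{r..<1}. w s)"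

definition is_radial_weight :: "(real \<Rightarrow> real) \<Rightarrow> bool" where
  "is_radial_weight w \<longleftrightarrow> radial_weight w \<and> (\<forall>r\<in>{0..<1}. omega_hat w r > 0)"

definition D_hat :: "(real \<Rightarrow> real) \<Rightarrow> bool" where
  "D_hat w \<longleftrightarrow> is_radial_weight w \<and>
     (\<exists>C>0. \<forall>r\<in>{0..<1}. omega_hat w r \<le> C * omega_hat w ((1 + r) / 2))"

text \<open>Moments mu_x = integral over [0,1) of r^x mu(r) (only natural x are needed).\<close>
definition moment :: "(real \<Rightarrow> real) \<Rightarrow> nat \<Rightarrow> real" where
  "moment m k = (LBINT r:{0..<1}. r ^ k * m r)"

definition r_seq :: "(real \<Rightarrow> real) \<Rightarrow> real \<Rightarrow> nat \<Rightarrow> real" where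
  "r_seq w K n = Inf {r\<in>{0..<1}. omega_hat w r = omega_hat w 0 * K powr (- real n)}"

definition M_seq :: "(real \<Rightarrow> real) \<Rightarrow> real \<Rightarrow> nat \<Rightarrow> nat" where
  "M_seq w K n = nat \<lfloor>1 / (1 - r_seq w K n)\<rfloor>"

definition M_prev :: "(real \<Rightarrow> real) \<Rightarrow> real \<Rightarrow> nat \<Rightarrow> nat" where
  "M_prev w K n = (if n = 0 then 0 else M_seq w K (n - 1))"

definition lacunary :: "(nat \<Rightarrow> nat) \<Rightarrow> bool" where
  "lacunary M \<longleftrightarrow> (\<exists>C>1. \<forall>n. real (M (Suc n)) \<ge> C * real (M n))"

definition tcoef :: "(complex \<Rightarrow> complex) \<Rightarrow> nat \<Rightarrow> complex" where
  "tcoef f k = (deriv ^^ k) f 0 / of_nat (fact k)"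

definition hadamard :: "complex poly \<Rightarrow> (complex \<Rightarrow> complex) \<Rightarrow> (complex \<Rightarrow> complex)" where
  "hadamard P f = (\<lambda>z. \<Sum>k\<le>degree P. coeff P k * tcoef f k * z ^ k)"

definition I_op :: "(real \<Rightarrow> real) \<Rightarrow> (complex \<Rightarrow> complex) \<Rightarrow> (complex \<Rightarrow> complex)" where
  "I_op m g = (\<lambda>z. \<Sum>n. tcoef g n * of_real (moment m (2 * n + 1)) * z ^ n)"

text \<open>Elements of a function space on the disc are represented canonically by
  functions vanishing outside the open unit disc.\<close>
definition diskr :: "(complex \<Rightarrow> complex) \<Rightarrow> (complex \<Rightarrow> complex)" where
  "diskr f = (\<lambda>z. if z \<in> ball 0 1 then f z else 0)"

definition admissible_banach :: "(complex \<Rightarrow> complex) set \<Rightarrow> ((complex \<Rightarrow> complex) \<Rightarrow> real) \<Rightarrow> bool" where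
  "admissible_banach X nX \<longleftrightarrow>
     \<comment> \<open>X is a space of analytic functions on the disc\<close>
     (\<forall>f\<in>X. f holomorphic_on ball 0 1 \<and> (\<forall>z. z \<notin> ball 0 1 \<longrightarrow> f z = 0)) \<and>
     \<comment> \<open>complex vector space\<close>
     (\<lambda>z. 0) \<in> X \<and>
     (\<forall>f\<in>X. \<forall>g\<in>X. (\<lambda>z. f z + g z) \<in> X) \<and>
     (\<forall>f\<in>X. \<forall>c. (\<lambda>z. c * f z) \<in> X) \<and>
     \<comment> \<open>norm\<close>
     (\<forall>f\<in>X. 0 \<le> nX f) \<and>
     (\<forall>f\<in>X. nX f = 0 \<longleftrightarrow> f = (\<lambda>z. 0)) \<and>
     (\<forall>f\<in>X. \<forall>c. nX (\<lambda>z. c * f z) = cmod c * nX f) \<and>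
     (\<forall>f\<in>X. \<forall>g\<in>X. nX (\<lambda>z. f z + g z) \<le> nX f + nX g) \<and>
     \<comment> \<open>completeness\<close>
     (\<forall>F. (\<forall>k. F k \<in> X) \<and>
          (\<forall>e>0. \<exists>N. \<forall>m\<ge>N. \<forall>n\<ge>N. nX (\<lambda>z. F m z - F n z) < e) \<longrightarrow>
          (\<exists>f\<in>X. (\<lambda>k. nX (\<lambda>z. F k z - f z)) \<longlonglongrightarrow> 0)) \<and>
     \<comment> \<open>(1) norm convergence implies locally uniform convergence in the disc\<close>
     (\<forall>F f. (\<forall>k. F k \<in> X) \<and> f \<in> X \<and> (\<lambda>k. nX (\<lambda>z. F k z - f z)) \<longlonglongrightarrow> 0 \<longrightarrow>
          (\<forall>K. compact K \<and> K \<subseteq> ball 0 1 \<longrightarrow> uniform_limit K F f sequentially)) \<and>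
     \<comment> \<open>(2) locally uniform convergence in a larger disc implies norm convergence\<close>
     (\<forall>r>1. \<forall>F f. (\<forall>k. F k holomorphic_on ball 0 r) \<and> f holomorphic_on ball 0 r \<and>
          (\<forall>K. compact K \<and> K \<subseteq> ball 0 r \<longrightarrow> uniform_limit K F f sequentially) \<longrightarrow>
          (\<forall>k. diskr (F k) \<in> X) \<and> diskr f \<in> X \<and>
          (\<lambda>k. nX (\<lambda>z. diskr (F k) z - diskr f z)) \<longlonglongrightarrow> 0) \<and>
     \<comment> \<open>(3) uniform boundedness of dilations\<close>
     (\<exists>C>0. \<forall>f\<in>X. \<forall>\<zeta>. cmod \<zeta> \<le> 1 \<longrightarrow>
          diskr (\<lambda>z. f (\<zeta> * z)) \<in> X \<and> nX (diskr (\<lambda>z. f (\<zeta> * z))) \<le> C * nX f)"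

end

theory Submission
  imports Defs
begin

text \<open>Split the moment integral over the intervals \<open>[r k, r (k + 1))\<close>, on which \<open>omega_hat\<close>
  is comparable to \<open>K powr (- k)\<close>: the \<open>k\<close>-th piece of \<open>moment mu y\<close> is about
  \<open>r k ^ y * K powr (- \<alpha> k)\<close>, and lacunarity of \<open>M\<close> makes \<open>moment mu y \<approx> K powr (- \<alpha> n)\<close>
  whenever \<open>y\<close> is comparable to \<open>M n\<close>.

  On the \<open>n\<close>-th block, whose spectrum lies in \<open>[M (n - 1), M (n + N))\<close>, the operator \<open>I_op mu\<close>
  multiplies the \<open>k\<close>-th Taylor coefficient by \<open>mu\<^sub>2\<^sub>k\<^sub>+\<^sub>1\<close>. Divided by \<open>mu\<^bsub>M n\<^esub>\<close>, or
  inverted, these factors extend by linear ramps to finitely supported sequences \<open>\<lambda>\<close> whose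
  weighted second differences \<open>\<Sum>s. (s + 1) |\<Delta>\<^sup>2 \<lambda> s|\<close> are bounded independently of \<open>n\<close>,
  because \<open>k \<mapsto> mu\<^sub>2\<^sub>k\<^sub>+\<^sub>1\<close> is decreasing and convex with
  \<open>(k + 1) (mu\<^sub>2\<^sub>k\<^sub>+\<^sub>1 - mu\<^sub>2\<^sub>k\<^sub>+\<^sub>3) \<le> 2 mu\<^sub>k\<^sub>+\<^sub>1\<close>. Summation by parts writes \<open>\<lambda>\<close> as a
  combination of Fejer multipliers \<open>j \<mapsto> s + 1 - j\<close>, and each of these is an average of
  rotations \<open>f (\<zeta> z)\<close>, whose norms are controlled by the dilation property of admissible
  spaces.\<close>

section \<open>Polynomials and Fejer means\<close>

definition poly_fun :: "(nat \<Rightarrow> complex) \<Rightarrow> nat \<Rightarrow> complex \<Rightarrow> complex" where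
  "poly_fun c D = (\<lambda>z. \<Sum>j<D. c j * z ^ j)"

lemma poly_fun_eq_poly: "poly_fun c D = poly (\<Sum>j<D. monom (c j) j)"
  by (auto simp: poly_fun_def poly_sum poly_monom)

lemma holomorphic_poly_fun: "poly_fun c D holomorphic_on S"
  unfolding poly_fun_def by (intro holomorphic_intros)

lemma poly_fun_extend:
  assumes "D \<le> E" "\<And>j. D \<le> j \<Longrightarrow> j < E \<Longrightarrow> c j = 0"
  shows "poly_fun c E = poly_fun c D"
  unfolding poly_fun_def
  by (intro ext sum.mono_neutral_right) (use assms in auto)

lemma higher_deriv_poly: "(deriv ^^ k) (poly (p :: complex poly)) = poly ((pderiv ^^ k) p)"
proof (induction k arbitrary: p)
  case (Suc k)
  have "deriv (poly p) = poly (pderiv p)"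
    by (intro ext DERIV_imp_deriv poly_DERIV)
  then show ?case
    by (simp only: funpow_Suc_right o_apply Suc.IH)
qed simp

lemma tcoef_poly: "tcoef (poly p) n = coeff p n"
proof -
  have "(deriv ^^ n) (poly p) 0 = coeff ((pderiv ^^ n) p) 0"
    by (simp add: higher_deriv_poly poly_0_coeff_0)
  also have "\<dots> = fact n * coeff p n"
    by (simp add: coeff_higher_pderiv pochhammer_fact)
  finally show ?thesis by (simp add: tcoef_def)
qed

lemma tcoef_poly_fun: "tcoef (poly_fun c D) n = (if n < D then c n else 0)"
  by (simp add: poly_fun_eq_poly tcoef_poly coeff_sum coeff_monom)

lemma hadamard_eq_poly_fun:
  assumes "\<And>k. D \<le> k \<Longrightarrow> coeff p k * tcoef g k = 0"
  shows "hadamard p g = poly_fun (\<lambda>k. coeff p k * tcoef g k) D"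
proof -
  define c where "c k = coeff p k * tcoef g k" for k
  have "hadamard p g = poly_fun c (Suc (degree p))"
    by (simp add: hadamard_def poly_fun_def c_def lessThan_Suc_atMost)
  also have "\<dots> = poly_fun c (max D (Suc (degree p)))"
    by (rule poly_fun_extend[symmetric]) (auto simp: c_def coeff_eq_0)
  also have "\<dots> = poly_fun c D"
    by (rule poly_fun_extend) (auto simp: c_def assms)
  finally show ?thesis by (simp add: c_def[abs_def])
qed

lemma I_op_poly_fun:
  "I_op m (poly_fun c D) = poly_fun (\<lambda>k. c k * of_real (moment m (2 * k + 1))) D"
proof
  fix z
  have "I_op m (poly_fun c D) z
      = (\<Sum>n<D. tcoef (poly_fun c D) n * of_real (moment m (2 * n + 1)) * z ^ n)"
    unfolding I_op_def by (rule suminf_finite) (auto simp: tcoef_poly_fun)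
  also have "\<dots> = (\<Sum>n<D. c n * of_real (moment m (2 * n + 1)) * z ^ n)"
    by (simp add: tcoef_poly_fun)
  finally show "I_op m (poly_fun c D) z = poly_fun (\<lambda>k. c k * of_real (moment m (2 * k + 1))) D z"
    by (simp add: poly_fun_def)
qed

definition unit_root :: "nat \<Rightarrow> int \<Rightarrow> complex" where
  "unit_root m t = exp (2 * of_real pi * \<i> * of_int t / of_nat m)"

lemma unit_root_add: "unit_root m (a + b) = unit_root m a * unit_root m b"
  by (simp add: unit_root_def exp_add[symmetric] add_divide_distrib distrib_left)

lemma unit_root_mult: "unit_root m (int k * t) = unit_root m t ^ k"
proof -
  have "unit_root m (int k * t) = exp (of_nat k * (2 * of_real pi * \<i> * of_int t / of_nat m))"
    by (simp add: unit_root_def mult_ac)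
  then show ?thesis by (simp only: exp_of_nat_mult unit_root_def)
qed

lemma cnj_unit_root: "cnj (unit_root m t) = unit_root m (- t)"
  by (simp add: unit_root_def exp_cnj)

lemma norm_unit_root: "cmod (unit_root m t) = 1"
  by (simp add: unit_root_def norm_exp_eq_Re)

lemma unit_root_eq_1_iff:
  assumes "m > 0"
  shows "unit_root m t = 1 \<longleftrightarrow> int m dvd t"
proof
  assume "unit_root m t = 1"
  then obtain n :: int where n: "Im (2 * of_real pi * \<i> * of_int t / of_nat m) = of_int (2 * n) * pi"
    unfolding unit_root_def exp_eq_1 by blast
  then have "2 * pi * t / m = 2 * n * pi"
    by (simp add: Im_divide_of_nat)
  then have "real_of_int t = real m * n"
    using assms pi_gt_zero by (simp add: field_simps)
  then have "t = int m * n"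
    by (metis of_int_eq_iff of_int_mult of_int_of_nat_eq)
  then show "int m dvd t" by simp
next
  assume "int m dvd t"
  then obtain q where q: "t = int m * q" by (auto elim: dvdE)
  have "2 * of_real pi * \<i> * of_int t / of_nat m = \<i> * (of_int (2 * q) * of_real pi)"
    using assms by (simp add: q field_simps)
  then show "unit_root m t = 1"
    unfolding unit_root_def by (simp only: exp_eq_1) simp
qed

lemma sum_unit_root:
  assumes "m > 0"
  shows "(\<Sum>k<m. unit_root m (int k * t)) = (if int m dvd t then of_nat m else 0)"
proof (cases "int m dvd t")
  case True
  then have "unit_root m (int k * t) = 1" for k
    using assms by (simp add: unit_root_eq_1_iff dvd_mult)
  then show ?thesis using True by simp
next
  case False
  have "unit_root m t ^ m = 1"
    using assms by (simp add: unit_root_mult[symmetric] unit_root_eq_1_iff)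
  moreover have "unit_root m t \<noteq> 1"
    using assms False by (simp add: unit_root_eq_1_iff)
  ultimately show ?thesis
    using False by (simp add: unit_root_mult geometric_sum)
qed

definition dirichlet_sum :: "nat \<Rightarrow> nat \<Rightarrow> nat \<Rightarrow> complex" where
  "dirichlet_sum m s k = (\<Sum>i\<le>s. unit_root m (int k * int i))"

text \<open>The discrete Fejer kernel \<open>|dirichlet_sum m s k|\<^sup>2\<close> has the Fourier coefficients
  \<open>s + 1 - j\<close>, as long as no aliasing modulo \<open>m\<close> occurs.\<close>

lemma fejer_kernel_coeff:
  assumes "m > 0" "j + s < m"
  shows "(\<Sum>k<m. dirichlet_sum m s k * cnj (dirichlet_sum m s k) * unit_root m (- (int k * int j)))
    = of_nat m * of_nat (s + 1 - j)"
proof -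
  have aliasing: "int m dvd (int i - int l - int j) \<longleftrightarrow> i = l + j" if "i \<le> s" "l \<le> s" for i l
  proof
    assume dvd: "int m dvd (int i - int l - int j)"
    have "\<bar>int i - int l - int j\<bar> < int m" using that assms by auto
    with dvd dvd_imp_le_int[OF _ dvd] show "i = l + j" by fastforce
  qed simp
  have "(\<Sum>k<m. dirichlet_sum m s k * cnj (dirichlet_sum m s k) * unit_root m (- (int k * int j)))
      = (\<Sum>k<m. \<Sum>i\<le>s. \<Sum>l\<le>s. unit_root m (int k * (int i - int l - int j)))"
  proof (rule sum.cong[OF refl])
    fix k
    have "dirichlet_sum m s k * cnj (dirichlet_sum m s k) * unit_root m (- (int k * int j))
       = (\<Sum>i\<le>s. \<Sum>l\<le>s. unit_root m (int k * int i) * unit_root m (- (int k * int l))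
            * unit_root m (- (int k * int j)))"
      by (simp add: dirichlet_sum_def cnj_unit_root sum_distrib_left sum_distrib_right) (rule sum.swap)
    also have "\<dots> = (\<Sum>i\<le>s. \<Sum>l\<le>s. unit_root m (int k * (int i - int l - int j)))"
      by (intro sum.cong refl) (simp add: unit_root_add[symmetric] algebra_simps)
    finally show "dirichlet_sum m s k * cnj (dirichlet_sum m s k) * unit_root m (- (int k * int j))
       = (\<Sum>i\<le>s. \<Sum>l\<le>s. unit_root m (int k * (int i - int l - int j)))" .
  qed
  also have "\<dots> = (\<Sum>i\<le>s. \<Sum>l\<le>s. \<Sum>k<m. unit_root m (int k * (int i - int l - int j)))"
    by (simp add: sum.swap[of _ "{..<m}"] sum.swap[of _ "{..<m}" "{..s}"])
  also have "\<dots> = (\<Sum>l\<le>s. \<Sum>i\<le>s. (if i = l + j then of_nat m else 0))"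
    by (subst sum.swap) (simp add: sum_unit_root[OF assms(1)] aliasing cong: if_cong)
  also have "\<dots> = of_nat m * of_nat (card {l. l \<le> s \<and> l + j \<le> s})"
    by (simp add: sum.delta sum.If_cases Int_def conj_commute)
  also have "{l. l \<le> s \<and> l + j \<le> s} = {..<s + 1 - j}" by auto
  finally show ?thesis by simp
qed

lemma sum_norm_dirichlet_sum:
  assumes "s < m"
  shows "(\<Sum>k<m. (cmod (dirichlet_sum m s k))\<^sup>2) = real (s + 1) * real m"
proof -
  have "complex_of_real (\<Sum>k<m. (cmod (dirichlet_sum m s k))\<^sup>2)
      = (\<Sum>k<m. dirichlet_sum m s k * cnj (dirichlet_sum m s k) * unit_root m (- (int k * int 0)))"
    by (simp add: complex_norm_square[symmetric] unit_root_def)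
  also have "\<dots> = of_real (real (s + 1) * real m)"
    using fejer_kernel_coeff[of m 0 s] assms by simp
  finally show ?thesis by (simp only: of_real_eq_iff)
qed

lemma poly_fun_fejer_eq_rotations:
  assumes "s + D < m"
  shows "poly_fun (\<lambda>j. of_nat (s + 1 - j) * c j) D z =
     (\<Sum>k<m. (dirichlet_sum m s k * cnj (dirichlet_sum m s k) / of_nat m)
               * poly_fun c D (unit_root m (- int k) * z))"
proof -
  have m: "m > 0" using assms by simp
  define F where "F k = dirichlet_sum m s k * cnj (dirichlet_sum m s k)" for k
  have "(\<Sum>k<m. (F k / of_nat m) * poly_fun c D (unit_root m (- int k) * z))
      = (\<Sum>k<m. \<Sum>j<D. (F k / of_nat m) * (c j * unit_root m (- (int k * int j)) * z ^ j))"
    unfolding poly_fun_def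
    by (intro sum.cong refl)
      (simp add: sum_distrib_left power_mult_distrib unit_root_mult[symmetric] mult_ac)
  also have "\<dots> = (\<Sum>j<D. c j * z ^ j * ((\<Sum>k<m. F k * unit_root m (- (int k * int j))) / of_nat m))"
    by (subst sum.swap) (simp add: sum_distrib_left sum_divide_distrib mult_ac)
  also have "\<dots> = (\<Sum>j<D. of_nat (s + 1 - j) * c j * z ^ j)"
    using m assms by (intro sum.cong refl) (simp add: F_def fejer_kernel_coeff)
  finally show ?thesis by (simp add: poly_fun_def F_def)
qed

definition dilation_bounded ::
    "(complex \<Rightarrow> complex) set \<Rightarrow> ((complex \<Rightarrow> complex) \<Rightarrow> real) \<Rightarrow> real \<Rightarrow> bool" where
  "dilation_bounded X nX C \<longleftrightarrow> (\<forall>f\<in>X. \<forall>\<zeta>. cmod \<zeta> \<le> 1 \<longrightarrow>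
     diskr (\<lambda>z. f (\<zeta> * z)) \<in> X \<and> nX (diskr (\<lambda>z. f (\<zeta> * z))) \<le> C * nX f)"

context
  fixes X :: "(complex \<Rightarrow> complex) set" and nX :: "(complex \<Rightarrow> complex) \<Rightarrow> real"
  assumes X: "admissible_banach X nX"
begin

lemma admissible_zero: "(\<lambda>z. 0) \<in> X" "nX (\<lambda>z. 0) = 0"
  using X unfolding admissible_banach_def by auto

lemma admissible_add: "f \<in> X \<Longrightarrow> g \<in> X \<Longrightarrow> (\<lambda>z. f z + g z) \<in> X"
  and admissible_norm_add: "f \<in> X \<Longrightarrow> g \<in> X \<Longrightarrow> nX (\<lambda>z. f z + g z) \<le> nX f + nX g"
  using X unfolding admissible_banach_def by auto

lemma admissible_scale: "f \<in> X \<Longrightarrow> (\<lambda>z. c * f z) \<in> X"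
  and admissible_norm_scale: "f \<in> X \<Longrightarrow> nX (\<lambda>z. c * f z) = cmod c * nX f"
  using X unfolding admissible_banach_def by auto

lemma admissible_norm_nonneg: "f \<in> X \<Longrightarrow> 0 \<le> nX f"
  using X unfolding admissible_banach_def by auto

lemma admissible_dilation_bounded: "\<exists>C>0. dilation_bounded X nX C"
  using X unfolding admissible_banach_def dilation_bounded_def by auto

lemma admissible_sum:
  assumes "finite S" "\<And>k. k \<in> S \<Longrightarrow> h k \<in> X"
  shows "(\<lambda>z. \<Sum>k\<in>S. a k * h k z) \<in> X \<and>
         nX (\<lambda>z. \<Sum>k\<in>S. a k * h k z) \<le> (\<Sum>k\<in>S. cmod (a k) * nX (h k))"
  using assms
proof (induction S rule: finite_induct)
  case empty
  then show ?case by (simp add: admissible_zero)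
next
  case (insert x S)
  then have "(\<lambda>z. a x * h x z) \<in> X" "(\<lambda>z. \<Sum>k\<in>S. a k * h k z) \<in> X"
    by (auto intro: admissible_scale)
  from admissible_add[OF this] admissible_norm_add[OF this] insert
  show ?case by (simp add: admissible_norm_scale)
qed

text \<open>Polynomials are entire, so property (2) of admissibility, applied to a constant sequence,
  puts them in \<open>X\<close>.\<close>

lemma admissible_poly_fun: "diskr (poly_fun c D) \<in> X"
proof -
  have "\<forall>K. compact K \<and> K \<subseteq> ball 0 2 \<longrightarrow>
      uniform_limit K (\<lambda>k. poly_fun c D) (poly_fun c D) sequentially"
    by (simp add: uniform_limit_const)
  then show ?thesis
    using X holomorphic_poly_fun unfolding admissible_banach_def
    by (metis one_less_numeral_iff semiring_norm(76))
qed

lemma admissible_norm_poly_fun_nonneg: "0 \<le> nX (diskr (poly_fun c D))"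
  by (rule admissible_norm_nonneg[OF admissible_poly_fun])

lemma diskr_dilation:
  assumes "cmod \<zeta> \<le> 1"
  shows "diskr (\<lambda>z. diskr f (\<zeta> * z)) = diskr (\<lambda>z. f (\<zeta> * z))"
proof
  fix z
  have "cmod (\<zeta> * z) < 1" if "cmod z < 1"
  proof -
    have "cmod \<zeta> * cmod z \<le> cmod z" using assms by (intro mult_left_le_one_le) auto
    then show ?thesis using that by (simp add: norm_mult)
  qed
  then show "diskr (\<lambda>z. diskr f (\<zeta> * z)) z = diskr (\<lambda>z. f (\<zeta> * z)) z"
    by (simp add: diskr_def)
qed

lemma norm_fejer_multiplier:
  assumes C: "dilation_bounded X nX C"
  shows "diskr (poly_fun (\<lambda>j. of_nat (s + 1 - j) * c j) D) \<in> X \<and>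
         nX (diskr (poly_fun (\<lambda>j. of_nat (s + 1 - j) * c j) D))
           \<le> C * of_nat (s + 1) * nX (diskr (poly_fun c D))"
proof -
  define m where "m = s + D + 1"
  define F where "F k = dirichlet_sum m s k * cnj (dirichlet_sum m s k) / of_nat m" for k
  define h where "h k = diskr (\<lambda>z. poly_fun c D (unit_root m (- int k) * z))" for k
  have m: "m > 0" "s < m" "s + D < m" by (auto simp: m_def)
  have h: "h k \<in> X \<and> nX (h k) \<le> C * nX (diskr (poly_fun c D))" for k
    using C admissible_poly_fun norm_unit_root diskr_dilation
    unfolding h_def dilation_bounded_def by (metis order_refl)
  have eq: "diskr (poly_fun (\<lambda>j. of_nat (s + 1 - j) * c j) D) = (\<lambda>z. \<Sum>k<m. F k * h k z)"
    using poly_fun_fejer_eq_rotations[OF m(3)] by (auto simp: diskr_def h_def F_def)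
  have "(\<Sum>k<m. cmod (F k) * nX (h k)) \<le> (\<Sum>k<m. cmod (F k) * (C * nX (diskr (poly_fun c D))))"
    by (intro sum_mono mult_left_mono) (use h in auto)
  also have "\<dots> = (\<Sum>k<m. (cmod (dirichlet_sum m s k))\<^sup>2) / of_nat m * (C * nX (diskr (poly_fun c D)))"
    by (simp add: F_def sum_distrib_right sum_divide_distrib norm_mult norm_divide power2_eq_square)
  also have "\<dots> = C * of_nat (s + 1) * nX (diskr (poly_fun c D))"
    using m by (simp add: sum_norm_dirichlet_sum)
  finally show ?thesis
    using admissible_sum[of "{..<m}" h F] h unfolding eq by auto
qed

lemma norm_multiplier_by_fejer:
  assumes C: "dilation_bounded X nX C"
    and lam: "\<And>j. j < D \<Longrightarrow> lam j = (\<Sum>s\<le>B. of_nat (s + 1 - j) * E s)"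
  shows "nX (diskr (poly_fun (\<lambda>j. of_real (lam j) * c j) D))
         \<le> C * (\<Sum>s\<le>B. of_nat (s + 1) * \<bar>E s\<bar>) * nX (diskr (poly_fun c D))"
proof -
  define h where "h s = diskr (poly_fun (\<lambda>j. of_nat (s + 1 - j) * c j) D)" for s
  have h: "h s \<in> X \<and> nX (h s) \<le> C * of_nat (s + 1) * nX (diskr (poly_fun c D))" for s
    unfolding h_def by (rule norm_fejer_multiplier[OF C])
  have eq: "diskr (poly_fun (\<lambda>j. of_real (lam j) * c j) D) = (\<lambda>z. \<Sum>s\<le>B. of_real (E s) * h s z)"
  proof
    fix z
    have "poly_fun (\<lambda>j. of_real (lam j) * c j) D z
        = (\<Sum>j<D. \<Sum>s\<le>B. of_real (E s) * (of_nat (s + 1 - j) * c j * z ^ j))"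
      unfolding poly_fun_def
      by (intro sum.cong refl) (simp add: lam sum_distrib_right sum_distrib_left mult_ac)
    also have "\<dots> = (\<Sum>s\<le>B. of_real (E s) * poly_fun (\<lambda>j. of_nat (s + 1 - j) * c j) D z)"
      unfolding poly_fun_def by (subst sum.swap) (simp add: sum_distrib_left)
    finally show "diskr (poly_fun (\<lambda>j. of_real (lam j) * c j) D) z = (\<Sum>s\<le>B. of_real (E s) * h s z)"
      by (simp add: diskr_def h_def)
  qed
  have "nX (\<lambda>z. \<Sum>s\<le>B. of_real (E s) * h s z) \<le> (\<Sum>s\<le>B. cmod (of_real (E s)) * nX (h s))"
    using admissible_sum[of "{..B}" h "\<lambda>s. of_real (E s)"] h by auto
  also have "\<dots> \<le> (\<Sum>s\<le>B. \<bar>E s\<bar> * (C * of_nat (s + 1) * nX (diskr (poly_fun c D))))"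
    using h by (auto intro!: sum_mono mult_left_mono)
  also have "\<dots> = C * (\<Sum>s\<le>B. of_nat (s + 1) * \<bar>E s\<bar>) * nX (diskr (poly_fun c D))"
    by (simp add: sum_distrib_left sum_distrib_right mult_ac)
  finally show ?thesis unfolding eq .
qed

end

section \<open>Moments of a weight with lacunary \<open>M\<close>\<close>

lemma set_integral_nonneg:
  fixes f :: "'a \<Rightarrow> real"
  assumes "\<And>x. x \<in> A \<Longrightarrow> 0 \<le> f x"
  shows "0 \<le> (LINT x:A|M. f x)"
  unfolding set_lebesgue_integral_def
  by (intro integral_nonneg_AE AE_I2) (use assms in \<open>auto simp: indicator_def\<close>)

locale lacunary_weight =
  fixes w :: "real \<Rightarrow> real" and K \<alpha> :: real
  assumes radial: "is_radial_weight w" and K_gt_1: "K > 1" and \<alpha>_pos: "\<alpha> > 0"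
    and lacunary: "lacunary (M_seq w K)"
begin

abbreviation W where "W \<equiv> omega_hat w"
abbreviation r where "r \<equiv> r_seq w K"
abbreviation M where "M \<equiv> M_seq w K"

definition level :: "nat \<Rightarrow> real" where
  "level n = W 0 * K powr (- real n)"

lemma w_nonneg: "x \<in> {0..<1} \<Longrightarrow> 0 \<le> w x"
  and set_integrable_w: "set_integrable lborel {0..<1::real} w"
  and W_pos: "x \<in> {0..<1} \<Longrightarrow> W x > 0"
  using radial by (auto simp: is_radial_weight_def radial_weight_def)

lemma set_integrable_w_subset: "0 \<le> a \<Longrightarrow> b \<le> 1 \<Longrightarrow> set_integrable lborel {a..<b} w"
  by (rule set_integrable_subset[OF set_integrable_w]) auto

lemma W_split:
  assumes "0 \<le> a" "a \<le> b" "b \<le> 1"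
  shows "W a = (LBINT s:{a..<b}. w s) + W b"
proof -
  have "{a..<1} = {a..<b} \<union> {b..<1}" using assms by auto
  then have "W a = (LBINT s:{a..<b} \<union> {b..<1}. w s)" by (simp add: omega_hat_def)
  also have "\<dots> = (LBINT s:{a..<b}. w s) + (LBINT s:{b..<1}. w s)"
    by (rule set_integral_Un) (use assms in \<open>auto intro: set_integrable_w_subset\<close>)
  finally show ?thesis by (simp add: omega_hat_def)
qed

lemma W_antimono: "0 \<le> a \<Longrightarrow> a \<le> b \<Longrightarrow> b \<le> 1 \<Longrightarrow> W b \<le> W a"
  using W_split[of a b] set_integral_nonneg[of "{a..<b}" w lborel] w_nonneg by auto

lemma W_1: "W 1 = 0"
  by (simp add: omega_hat_def set_lebesgue_integral_def)

lemma continuous_on_W: "continuous_on {0..1} W"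
proof -
  have "w integrable_on {0..<1}"
    by (rule set_borel_integral_eq_integral(1)[OF set_integrable_w])
  then have "w integrable_on {0..1}"
    by (rule integrable_spike_set) (auto intro: negligible_subset[of "{1}"])
  then have "continuous_on {0..1} (\<lambda>x. integral {x..1} w)"
    by (rule indefinite_integral_continuous_1')
  moreover have "integral {x..1} w = W x" if "x \<in> {0..1}" for x
  proof -
    have "W x = integral {x..<1} w"
      unfolding omega_hat_def
      by (rule set_borel_integral_eq_integral(2)) (use that in \<open>auto intro: set_integrable_w_subset\<close>)
    also have "\<dots> = integral {x..1} w"
      by (rule integral_spike_set) (auto intro: negligible_subset[of "{1}"])
    finally show ?thesis by simp
  qed
  ultimately show ?thesis by (rule continuous_on_eq)
qed

lemma level_pos: "level n > 0"
  using W_pos[of 0] K_gt_1 by (simp add: level_def)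

lemma level_le: "level n \<le> W 0"
proof -
  have "K powr (- real n) \<le> 1"
    using K_gt_1 by (simp add: powr_minus inverse_le_1_iff ge_one_powr_ge_zero)
  then show ?thesis using W_pos[of 0] unfolding level_def by (simp add: mult_left_le)
qed

lemma level_Suc: "level (Suc n) = level n / K"
proof -
  have "K powr (- real (Suc n)) = K powr (- real n + (-1))" by (simp add: algebra_simps)
  also have "\<dots> = K powr (- real n) * K powr (-1)" by (rule powr_add)
  also have "K powr (-1) = inverse K" using K_gt_1 by (simp add: powr_minus)
  finally show ?thesis by (simp add: level_def divide_inverse mult_ac)
qed

definition level_set :: "nat \<Rightarrow> real set" where
  "level_set n = {x \<in> {0..<1}. W x = level n}"

lemma r_eq_Inf_level_set: "r n = Inf (level_set n)"
  by (simp add: r_seq_def level_set_def level_def)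

lemma level_set_eq: "level_set n = {x \<in> {0..1}. W x = level n}"
proof -
  have "x \<noteq> 1" if "W x = level n" for x using that level_pos[of n] W_1 by auto
  then show ?thesis by (force simp: level_set_def)
qed

lemma bdd_below_level_set: "bdd_below (level_set n)"
  by (auto simp: level_set_def intro: bdd_belowI[of _ 0])

lemma r_in_level_set: "r n \<in> level_set n"
proof -
  have "\<exists>x. 0 \<le> x \<and> x \<le> 1 \<and> W x = level n"
    by (rule IVT2') (use W_1 level_pos[of n] level_le[of n] continuous_on_W in auto)
  then have "level_set n \<noteq> {}" by (auto simp: level_set_eq)
  moreover have "closed (level_set n)"
    unfolding level_set_eq by (rule continuous_closed_preimage_constant[OF continuous_on_W]) simp
  ultimately show ?thesis
    unfolding r_eq_Inf_level_set using bdd_below_level_set closed_contains_Inf by blast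
qed

lemma r_nonneg: "0 \<le> r n" and r_less_1: "r n < 1" and W_r: "W (r n) = level n"
  using r_in_level_set[of n] by (auto simp: level_set_def)

lemma r_le: "x \<in> level_set n \<Longrightarrow> r n \<le> x"
  unfolding r_eq_Inf_level_set by (rule cInf_lower[OF _ bdd_below_level_set])

lemma W_gt_level: 
  assumes "0 \<le> x" "x < r n"
  shows "W x > level n"
proof (rule ccontr)
  assume "\<not> W x > level n"
  then have "\<exists>y. 0 \<le> y \<and> y \<le> x \<and> W y = level n"
    by (intro IVT2') (use assms level_le[of n] r_less_1[of n]
        in \<open>auto intro: continuous_on_subset[OF continuous_on_W]\<close>)
  then obtain y where "0 \<le> y" "y \<le> x" "W y = level n" by blast
  then have "r n \<le> y" using assms r_less_1[of n] by (intro r_le) (auto simp: level_set_eq)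
  then show False using \<open>y \<le> x\<close> assms by simp
qed

lemma W_le_level: "r n \<le> x \<Longrightarrow> x \<le> 1 \<Longrightarrow> W x \<le> level n"
  using W_antimono[of "r n" x] r_nonneg[of n] W_r[of n] by simp

lemma r_0: "r 0 = 0"
  using r_le[of 0 0] r_nonneg[of 0] K_gt_1 by (simp add: level_set_def level_def)

lemma r_less_Suc: "r n < r (Suc n)"
proof (rule ccontr)
  assume "\<not> r n < r (Suc n)"
  then have "W (r n) \<le> W (r (Suc n))"
    using W_antimono[of "r (Suc n)" "r n"] r_nonneg[of "Suc n"] r_less_1[of n] by simp
  then have "level n \<le> level n / K" by (simp add: W_r level_Suc)
  then show False using level_pos[of n] K_gt_1 by (simp add: divide_le_eq field_simps)
qed

lemma r_mono: "m \<le> n \<Longrightarrow> r m \<le> r n"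
  by (rule lift_Suc_mono_le[of r]) (auto intro: less_imp_le r_less_Suc)

lemma M_ge_1: "1 \<le> M n"
  and one_minus_r_le: "1 - r n \<le> 1 / real (M n)"
  and one_minus_r_gt: "1 / (2 * real (M n)) < 1 - r n"
proof -
  define x where "x = 1 / (1 - r n)"
  have d: "0 < 1 - r n" "1 - r n \<le> 1" using r_nonneg[of n] r_less_1[of n] by auto
  then have "x \<ge> 1" by (simp add: x_def)
  then have fl: "real_of_int \<lfloor>x\<rfloor> \<le> x" "x < real_of_int \<lfloor>x\<rfloor> + 1" "\<lfloor>x\<rfloor> \<ge> 1" by linarith+
  have Mx: "real (M n) = real_of_int \<lfloor>x\<rfloor>"
    unfolding M_seq_def x_def[symmetric] by (rule of_nat_nat) (use fl in linarith)
  show "1 \<le> M n" using Mx fl by linarith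
  have "real (M n) \<le> 1 / (1 - r n)" using Mx fl by (simp add: x_def)
  then show "1 - r n \<le> 1 / real (M n)" using d \<open>1 \<le> M n\<close> by (simp add: field_simps)
  show "1 / (2 * real (M n)) < 1 - r n"
  proof -
    have "x < 2 * real (M n)" using Mx fl by linarith
    then have "1 / (1 - r n) < 2 * real (M n)" by (simp add: x_def)
    then show ?thesis using d \<open>1 \<le> M n\<close> by (simp add: field_simps)
  qed
qed

definition lac_ratio :: real where
  "lac_ratio = (SOME C. C > 1 \<and> (\<forall>n. real (M (Suc n)) \<ge> C * real (M n)))"

lemma lac_ratio_gt_1: "lac_ratio > 1"
  and M_Suc_ge: "real (M (Suc n)) \<ge> lac_ratio * real (M n)"
proof -
  have "\<exists>C. C > 1 \<and> (\<forall>n. real (M (Suc n)) \<ge> C * real (M n))"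
    using lacunary by (simp add: lacunary_def)
  then have "lac_ratio > 1 \<and> (\<forall>n. real (M (Suc n)) \<ge> lac_ratio * real (M n))"
    unfolding lac_ratio_def by (rule someI_ex)
  then show "lac_ratio > 1" "real (M (Suc n)) \<ge> lac_ratio * real (M n)" by auto
qed

lemma M_add_ge: "real (M (n + j)) \<ge> lac_ratio ^ j * real (M n)"
proof (induction j)
  case (Suc j)
  have "lac_ratio ^ Suc j * real (M n) \<le> lac_ratio * real (M (n + j))"
    using Suc lac_ratio_gt_1 by simp
  also have "\<dots> \<le> real (M (Suc (n + j)))" by (rule M_Suc_ge)
  finally show ?case by simp
qed simp

lemma M_mono: "m \<le> n \<Longrightarrow> M m \<le> M n"
proof -
  assume "m \<le> n"
  then obtain j where j: "n = m + j" using le_Suc_ex by blast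
  have "real (M m) \<le> lac_ratio ^ j * real (M m)"
    using lac_ratio_gt_1 by (simp add: mult_le_cancel_right1)
  then have "real (M m) \<le> real (M n)" using M_add_ge[where n=m and j=j] unfolding j by linarith
  then show "M m \<le> M n" by simp
qed

lemma M_less_Suc: "M n < M (Suc n)"
proof -
  have "real (M n) < lac_ratio * real (M n)"
    using lac_ratio_gt_1 M_ge_1[of n] by simp
  then show ?thesis using M_Suc_ge[of n] by linarith
qed

lemma ex_r_gt:
  assumes "x < 1"
  shows "\<exists>n. x < r n"
proof -
  obtain j where j: "1 / (1 - x) < lac_ratio ^ j" using real_arch_pow[OF lac_ratio_gt_1] by blast
  have "lac_ratio ^ j * 1 \<le> lac_ratio ^ j * real (M 0)"
    using M_ge_1[of 0] lac_ratio_gt_1 by (intro mult_left_mono) auto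
  then have "lac_ratio ^ j \<le> real (M j)" using M_add_ge[where n=0 and j=j] by simp
  then have "1 / (1 - x) < real (M j)" using j by linarith
  then have "1 / real (M j) < 1 / (1 / (1 - x))"
    using assms M_ge_1[of j] by (intro divide_strict_left_mono) auto
  then have "1 / real (M j) < 1 - x" by simp
  then show ?thesis using one_minus_r_le[of j] by (intro exI[of _ j]) linarith
qed

end

lemma powr_between_bounds:
  fixes t K x e :: real
  assumes "0 < t" "1 < K" "t / K \<le> x" "x \<le> t"
  shows "x powr e \<le> t powr e * K powr \<bar>e\<bar>" "t powr e * K powr (- \<bar>e\<bar>) \<le> x powr e"
proof -
  have "0 < t / K" using assms by simp
  then have x: "0 < x" using assms(3) by linarith
  have tK: "(t / K) powr e = t powr e * K powr (- e)"
    using assms by (subst powr_divide) (auto simp: powr_minus divide_inverse)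
  have K1: "1 \<le> K powr \<bar>e\<bar>" "K powr (- \<bar>e\<bar>) \<le> 1"
    using assms by (auto simp: powr_minus inverse_le_1_iff ge_one_powr_ge_zero)
  show "x powr e \<le> t powr e * K powr \<bar>e\<bar>"
  proof (cases "e \<ge> 0")
    case True
    have "x powr e \<le> t powr e" using assms x True by (intro powr_mono2) auto
    also have "\<dots> \<le> t powr e * K powr \<bar>e\<bar>" using K1 by (simp add: mult_le_cancel_left1)
    finally show ?thesis .
  next
    case False
    have "x powr e \<le> (t / K) powr e" using assms False by (intro powr_mono2') auto
    then show ?thesis using tK False by simp
  qed
  show "t powr e * K powr (- \<bar>e\<bar>) \<le> x powr e"
  proof (cases "e \<ge> 0")
    case True
    have "(t / K) powr e \<le> x powr e" using assms True by (intro powr_mono2) auto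
    then show ?thesis using tK True by simp
  next
    case False
    have "t powr e * K powr (- \<bar>e\<bar>) \<le> t powr e" using K1 by (simp add: mult_left_le)
    also have "\<dots> \<le> x powr e" using assms x False by (intro powr_mono2') auto
    finally show ?thesis .
  qed
qed

lemma exp_neg_le_power:
  fixes z :: real
  assumes "0 < z" "1 \<le> p"
  shows "exp (- z) \<le> (real p / z) ^ p"
proof -
  have "(z / real p) ^ p \<le> (1 + z / real p) ^ p"
    using assms by (intro power_mono) auto
  also have "\<dots> \<le> exp z"
    using assms by (intro exp_ge_one_plus_x_over_n_power_n) auto
  finally have le: "(z / real p) ^ p \<le> exp z" .
  have "exp (- z) = 1 / exp z" by (simp add: exp_minus field_simps)
  also have "\<dots> \<le> 1 / (z / real p) ^ p" using le assms by (intro divide_left_mono) auto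
  also have "\<dots> = (real p / z) ^ p" by (simp add: power_divide)
  finally show ?thesis .
qed

lemma power_le_exp_neg:
  fixes x :: real
  assumes "0 \<le> x"
  shows "x ^ m \<le> exp (- ((1 - x) * real m))"
proof -
  have "x \<le> exp (- (1 - x))" using exp_ge_add_one_self[of "- (1 - x)"] by simp
  then have "x ^ m \<le> exp (- (1 - x)) ^ m" using assms by (intro power_mono) auto
  also have "\<dots> = exp (- ((1 - x) * real m))" by (simp add: exp_of_nat_mult[symmetric] algebra_simps)
  finally show ?thesis .
qed

context lacunary_weight
begin

definition mu :: "real \<Rightarrow> real" where
  "mu x = w x * W x powr (\<alpha> - 1)"

text \<open>A continuous extension of \<open>W\<close> to the real line, used to get measurability of \<open>mu\<close>.\<close>

definition W_clamped :: "real \<Rightarrow> real" where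
  "W_clamped x = W (max 0 (min 1 x))"

lemma mu_nonneg: "x \<in> {0..<1} \<Longrightarrow> 0 \<le> mu x"
  using w_nonneg by (simp add: mu_def)

lemma borel_measurable_W_clamped[measurable]: "W_clamped \<in> borel_measurable lborel"
proof -
  have "continuous_on UNIV (\<lambda>x::real. max 0 (min 1 x))" by (intro continuous_intros)
  then have "continuous_on UNIV W_clamped"
    unfolding W_clamped_def by (rule continuous_on_compose2[OF continuous_on_W]) auto
  then show ?thesis using borel_measurable_continuous_onI by simp
qed

lemma borel_measurable_w[measurable]:
  "(\<lambda>x. indicator {0..<1} x *\<^sub>R w x) \<in> borel_measurable lborel"
  using set_integrable_w unfolding set_integrable_def by auto

lemma set_integrable_bounded_mult_w:
  assumes "0 \<le> a" "b \<le> 1" and [measurable]: "h \<in> borel_measurable lborel"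
    and h: "\<And>x. x \<in> {a..<b} \<Longrightarrow> \<bar>h x\<bar> \<le> B"
  shows "set_integrable lborel {a..<b} (\<lambda>x. h x * w x)"
proof (rule set_integrable_bound[of lborel "{a..<b}" "\<lambda>x. B * w x"])
  show "set_integrable lborel {a..<b} (\<lambda>x. B * w x)"
    using set_integrable_w_subset[OF assms(1,2)] by auto
  have eq: "(\<lambda>x. indicator {a..<b} x *\<^sub>R (h x * w x))
      = (\<lambda>x. indicator {a..<b} x * h x * (indicator {0..<1} x *\<^sub>R w x))"
    using assms(1,2) by (auto simp: indicator_def fun_eq_iff)
  show "set_borel_measurable lborel {a..<b} (\<lambda>x. h x * w x)"
    unfolding set_borel_measurable_def eq by measurable
  show "AE x in lborel. x \<in> {a..<b} \<longrightarrow> norm (h x * w x) \<le> norm (B * w x)"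
  proof (intro AE_I2 impI)
    fix x assume x: "x \<in> {a..<b}"
    then have "0 \<le> w x" using assms(1,2) by (intro w_nonneg) auto
    moreover have "\<bar>h x\<bar> \<le> \<bar>B\<bar>" using h[OF x] by simp
    ultimately show "norm (h x * w x) \<le> norm (B * w x)"
      by (simp add: abs_mult mult_right_mono)
  qed
qed

definition moment_piece :: "nat \<Rightarrow> nat \<Rightarrow> real" where
  "moment_piece k y = (LBINT x:{r k..<r (Suc k)}. x ^ y * mu x)"

lemma piece_subset: "x \<in> {r k..<r (Suc k)} \<Longrightarrow> 0 \<le> x \<and> x < 1"
  using r_nonneg[of k] r_less_1[of "Suc k"] by auto

lemma W_on_piece: "x \<in> {r k..<r (Suc k)} \<Longrightarrow> level k / K \<le> W x \<and> W x \<le> level k"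
  using W_gt_level[of x "Suc k"] W_le_level[of k x] piece_subset[of x k] level_Suc[of k] by auto

lemma set_integrable_piece: "set_integrable lborel {r k..<r (Suc k)} (\<lambda>x. x ^ y * mu x)"
proof -
  have "set_integrable lborel {r k..<r (Suc k)} (\<lambda>x. (x ^ y * W_clamped x powr (\<alpha> - 1)) * w x)"
  proof (rule set_integrable_bounded_mult_w)
    show "0 \<le> r k" "r (Suc k) \<le> 1" using r_nonneg[of k] r_less_1[of "Suc k"] by auto
    fix x assume x: "x \<in> {r k..<r (Suc k)}"
    then have x01: "0 \<le> x" "x \<le> 1" and Wx: "W_clamped x = W x"
      using piece_subset[OF x] by (auto simp: W_clamped_def)
    have "\<bar>x ^ y * W_clamped x powr (\<alpha> - 1)\<bar> = x ^ y * W x powr (\<alpha> - 1)" using x01 Wx by simp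
    also have "\<dots> \<le> 1 * (level k powr (\<alpha> - 1) * K powr \<bar>\<alpha> - 1\<bar>)"
      using x01 W_on_piece[OF x] powr_between_bounds(1)[OF level_pos K_gt_1]
      by (intro mult_mono) (auto simp: power_le_one)
    finally show "\<bar>x ^ y * W_clamped x powr (\<alpha> - 1)\<bar> \<le> level k powr (\<alpha> - 1) * K powr \<bar>\<alpha> - 1\<bar>"
      by simp
  qed simp
  moreover have "set_integrable lborel {r k..<r (Suc k)} (\<lambda>x. (x ^ y * W_clamped x powr (\<alpha> - 1)) * w x)
      = set_integrable lborel {r k..<r (Suc k)} (\<lambda>x. x ^ y * mu x)"
  proof (rule set_integrable_cong)
    fix x assume "x \<in> {r k..<r (Suc k)}"
    then show "x ^ y * W_clamped x powr (\<alpha> - 1) * w x = x ^ y * mu x"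
      using piece_subset[of x k] by (simp add: W_clamped_def mu_def)
  qed simp_all
  ultimately show ?thesis by simp
qed

lemma integral_w_piece: "(LBINT x:{r k..<r (Suc k)}. w x) = level k * (1 - 1 / K)"
proof -
  have "W (r k) = (LBINT x:{r k..<r (Suc k)}. w x) + W (r (Suc k))"
    using r_nonneg[of k] r_less_1[of "Suc k"] r_less_Suc[of k] by (intro W_split) auto
  then show ?thesis using W_r[of k] W_r[of "Suc k"] level_Suc[of k] by (simp add: algebra_simps)
qed

definition Q :: real where "Q = K powr (- \<alpha>)"
definition A_up :: real where "A_up = K powr \<bar>\<alpha> - 1\<bar> * (1 - 1 / K) * W 0 powr \<alpha>"
definition A_lo :: real where "A_lo = K powr (- \<bar>\<alpha> - 1\<bar>) * (1 - 1 / K) * W 0 powr \<alpha>"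

lemma Q_pos: "0 < Q" and Q_less_1: "Q < 1"
proof -
  show "0 < Q" using K_gt_1 by (simp add: Q_def)
  have "K powr (- \<alpha>) < K powr 0" using K_gt_1 \<alpha>_pos by (intro powr_less_mono) auto
  then show "Q < 1" using K_gt_1 by (simp add: Q_def)
qed

lemma A_up_pos: "0 < A_up" and A_lo_pos: "0 < A_lo"
  using K_gt_1 W_pos[of 0] by (simp_all add: A_up_def A_lo_def)

lemma Q_power: "Q ^ k = K powr (- \<alpha> * real k)"
proof -
  have "K powr (- \<alpha> * real k) = (K powr (- \<alpha>)) powr (real k)" by (simp add: powr_powr)
  also have "\<dots> = (K powr (- \<alpha>)) ^ k" using K_gt_1 by (intro powr_realpow) simp
  finally show ?thesis by (simp add: Q_def)
qed

text \<open>On the \<open>k\<close>-th piece \<open>W \<approx> level k\<close>, so \<open>\<integral> mu \<approx> level k powr \<alpha> \<approx> Q ^ k\<close>.\<close>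

lemma level_integral_piece:
  "level k powr (\<alpha> - 1) * (LBINT x:{r k..<r (Suc k)}. w x) = (1 - 1 / K) * W 0 powr \<alpha> * Q ^ k"
proof -
  have "level k powr (\<alpha> - 1) * level k = level k powr \<alpha>"
    using level_pos[of k] by (simp add: powr_diff)
  moreover have "level k powr \<alpha> = W 0 powr \<alpha> * (K powr (- real k)) powr \<alpha>"
    unfolding level_def using W_pos[of 0] K_gt_1 by (simp add: powr_mult)
  moreover have "(K powr (- real k)) powr \<alpha> = Q ^ k"
    by (simp add: Q_power powr_powr mult_ac)
  ultimately show ?thesis by (simp add: integral_w_piece algebra_simps)
qed

lemma piece_upper: "moment_piece k y \<le> r (Suc k) ^ y * A_up * Q ^ k"
proof -
  define B where "B = r (Suc k) ^ y * (level k powr (\<alpha> - 1) * K powr \<bar>\<alpha> - 1\<bar>)"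
  have "moment_piece k y \<le> (LBINT x:{r k..<r (Suc k)}. B * w x)"
    unfolding moment_piece_def
  proof (rule set_integral_mono[OF set_integrable_piece])
    show "set_integrable lborel {r k..<r (Suc k)} (\<lambda>x. B * w x)"
      using set_integrable_w_subset[of "r k" "r (Suc k)"] r_nonneg[of k] r_less_1[of "Suc k"] by auto
    fix x assume x: "x \<in> {r k..<r (Suc k)}"
    have "x ^ y \<le> r (Suc k) ^ y" using x piece_subset[OF x] by (intro power_mono) auto
    moreover have "W x powr (\<alpha> - 1) \<le> level k powr (\<alpha> - 1) * K powr \<bar>\<alpha> - 1\<bar>"
      using W_on_piece[OF x] powr_between_bounds(1)[OF level_pos K_gt_1] by auto
    ultimately have "x ^ y * W x powr (\<alpha> - 1) \<le> B"
      unfolding B_def using piece_subset[OF x] r_nonneg[of "Suc k"] by (intro mult_mono) auto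
    from mult_right_mono[OF this w_nonneg] piece_subset[OF x]
    show "x ^ y * mu x \<le> B * w x" by (simp add: mu_def mult_ac)
  qed
  also have "\<dots> = r (Suc k) ^ y * A_up * Q ^ k"
    using level_integral_piece[of k] by (simp add: B_def A_up_def mult_ac)
  finally show ?thesis .
qed

lemma piece_lower: "r k ^ y * A_lo * Q ^ k \<le> moment_piece k y"
proof -
  define B where "B = r k ^ y * (level k powr (\<alpha> - 1) * K powr (- \<bar>\<alpha> - 1\<bar>))"
  have "r k ^ y * A_lo * Q ^ k = (LBINT x:{r k..<r (Suc k)}. B * w x)"
    using level_integral_piece[of k] by (simp add: B_def A_lo_def mult_ac)
  also have "\<dots> \<le> moment_piece k y"
    unfolding moment_piece_def
  proof (rule set_integral_mono[OF _ set_integrable_piece])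
    show "set_integrable lborel {r k..<r (Suc k)} (\<lambda>x. B * w x)"
      using set_integrable_w_subset[of "r k" "r (Suc k)"] r_nonneg[of k] r_less_1[of "Suc k"] by auto
    fix x assume x: "x \<in> {r k..<r (Suc k)}"
    have "r k ^ y \<le> x ^ y" using x r_nonneg[of k] by (intro power_mono) auto
    moreover have "level k powr (\<alpha> - 1) * K powr (- \<bar>\<alpha> - 1\<bar>) \<le> W x powr (\<alpha> - 1)"
      using W_on_piece[OF x] powr_between_bounds(2)[OF level_pos K_gt_1] by auto
    ultimately have "B \<le> x ^ y * W x powr (\<alpha> - 1)"
      unfolding B_def using r_nonneg[of k] piece_subset[OF x] by (intro mult_mono) auto
    from mult_right_mono[OF this w_nonneg] piece_subset[OF x]
    show "B * w x \<le> x ^ y * mu x" by (simp add: mu_def mult_ac)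
  qed
  finally show ?thesis .
qed

lemma piece_nonneg: "0 \<le> moment_piece k y"
proof -
  have "0 \<le> r k ^ y * A_lo * Q ^ k" using r_nonneg[of k] A_lo_pos Q_pos by simp
  then show ?thesis using piece_lower[of k y] by linarith
qed

lemma piece_le_geometric: "moment_piece k y \<le> A_up * Q ^ k"
proof -
  have "r (Suc k) ^ y \<le> 1" using r_nonneg r_less_1 by (intro power_le_one) (auto intro: less_imp_le)
  then have "r (Suc k) ^ y * (A_up * Q ^ k) \<le> A_up * Q ^ k"
    using A_up_pos Q_pos r_nonneg[of "Suc k"] by (intro mult_left_le_one_le) auto
  then show ?thesis using piece_upper[of k y] by (simp add: mult_ac)
qed

lemma summable_geometric_A_up: "summable (\<lambda>k. A_up * Q ^ k)"
  using Q_pos Q_less_1 by (intro summable_mult) simp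

lemma summable_piece: "summable (\<lambda>k. moment_piece k y)"
  by (rule summable_comparison_test'[OF summable_geometric_A_up, of 0])
    (use piece_nonneg piece_le_geometric in auto)

lemma set_integral_below_r:
  "set_integrable lborel {0..<r n} (\<lambda>x. x ^ y * mu x) \<and>
   (LBINT x:{0..<r n}. x ^ y * mu x) = (\<Sum>k<n. moment_piece k y)"
proof (induction n)
  case 0
  then show ?case using r_0 by (simp add: set_integrable_def set_lebesgue_integral_def)
next
  case (Suc n)
  have un: "{0..<r (Suc n)} = {0..<r n} \<union> {r n..<r (Suc n)}"
    using r_less_Suc[of n] r_nonneg[of n] by auto
  have "set_integrable lborel {0..<r n} (\<lambda>x. x ^ y * mu x)" using Suc by simp
  note ints = this set_integrable_piece[of n y]
  have "set_integrable lborel {0..<r (Suc n)} (\<lambda>x. x ^ y * mu x)"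
    unfolding un by (rule set_integrable_Un[OF ints]) auto
  moreover have "(LBINT x:{0..<r (Suc n)}. x ^ y * mu x) = (\<Sum>k<Suc n. moment_piece k y)"
    unfolding un using set_integral_Un[OF _ ints] Suc by (simp add: moment_piece_def)
  ultimately show ?case by simp
qed

text \<open>Monotone convergence, since the \<open>r n\<close> increase to \<open>1\<close>.\<close>

lemma moment_eq_suminf_pieces:
  "set_integrable lborel {0..<1} (\<lambda>x. x ^ y * mu x) \<and> moment mu y = (\<Sum>k. moment_piece k y)"
proof -
  define f where "f i x = indicator {0..<r i} x * (x ^ y * mu x)" for i x
  define u where "u x = indicator {0..<1} x * (x ^ y * mu x)" for x
  have fi: "integrable lborel (f i)" and fint: "integral\<^sup>L lborel (f i) = (\<Sum>k<i. moment_piece k y)" for i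
    using set_integral_below_r[of i]
    unfolding set_integrable_def set_lebesgue_integral_def f_def by simp_all
  have u_eq: "u = (\<lambda>x. x ^ y * W_clamped x powr (\<alpha> - 1) * (indicator {0..<1} x *\<^sub>R w x))"
    by (auto simp: u_def fun_eq_iff indicator_def mu_def W_clamped_def)
  have um: "u \<in> borel_measurable lborel" unfolding u_eq by measurable
  have nonneg: "0 \<le> x ^ y * mu x" if "x \<in> {0..<1}" for x using that mu_nonneg by simp
  have mono: "mono (\<lambda>n. f n x)" for x
  proof (rule monoI)
    fix n m :: nat assume "n \<le> m"
    then show "f n x \<le> f m x"
      using r_mono[of n m] nonneg[of x] r_less_1[of m] by (auto simp: f_def indicator_def)
  qed
  have pos: "0 \<le> f i x" for i x
    using nonneg[of x] r_less_1[of i] by (auto simp: f_def indicator_def)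
  have lim: "(\<lambda>i. f i x) \<longlonglongrightarrow> u x" for x
  proof (cases "0 \<le> x \<and> x < 1")
    case True
    then obtain n0 where n0: "x < r n0" using ex_r_gt by blast
    have "eventually (\<lambda>i. f i x = u x) sequentially"
    proof (rule eventually_sequentiallyI)
      fix i assume "n0 \<le> i"
      then have "x < r i" using n0 r_mono[of n0 i] by simp
      then show "f i x = u x" using True by (simp add: f_def u_def indicator_def)
    qed
    then show ?thesis by (rule tendsto_eventually)
  next
    case False
    then have "f i x = u x" for i using r_less_1[of i] by (auto simp: f_def u_def indicator_def)
    then show ?thesis by simp
  qed
  have "(\<lambda>i. integral\<^sup>L lborel (f i)) \<longlonglongrightarrow> (\<Sum>k. moment_piece k y)"
    unfolding fint by (rule summable_LIMSEQ[OF summable_piece])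
  from integral_monotone_convergence_nonneg[OF fi AE_I2[OF mono] AE_I2[OF pos] AE_I2[OF lim] this um]
  show ?thesis
    unfolding moment_def set_lebesgue_integral_def set_integrable_def u_def by simp
qed

lemma set_integrable_moment: "set_integrable lborel {0..<1} (\<lambda>x. x ^ y * mu x)"
  and moment_eq_suminf: "moment mu y = (\<Sum>k. moment_piece k y)"
  using moment_eq_suminf_pieces by simp_all

lemma moment_nonneg: "0 \<le> moment mu y"
  unfolding moment_def by (rule set_integral_nonneg) (simp add: mu_nonneg)

lemma moment_antimono: "y \<le> y' \<Longrightarrow> moment mu y' \<le> moment mu y"
  unfolding moment_def
proof (rule set_integral_mono[OF set_integrable_moment set_integrable_moment])
  fix x :: real assume "y \<le> y'" "x \<in> {0..<1}"
  then show "x ^ y' * mu x \<le> x ^ y * mu x"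
    using mu_nonneg by (intro mult_right_mono power_decreasing) auto
qed

text \<open>If \<open>y \<le> M m / 2\<close>, the \<open>m\<close>-th piece alone gives \<open>moment mu y \<gtrsim> Q ^ m\<close>:
  there \<open>x ^ y \<ge> (1 - 1 / M m) ^ y \<ge> 1 / 2\<close> by Bernoulli's inequality.\<close>

lemma moment_lower:
  assumes "2 * real y \<le> real (M m)"
  shows "A_lo / 2 * Q ^ m \<le> moment mu y"
proof -
  have M1: "1 \<le> M m" by (rule M_ge_1)
  have "1 / 2 \<le> 1 + real y * (- (1 / real (M m)))"
    using assms M1 by (simp add: field_simps)
  also have "\<dots> \<le> (1 - 1 / real (M m)) ^ y"
    using M1 Bernoulli_inequality[of "- (1 / real (M m))" y] by simp
  also have "\<dots> \<le> r m ^ y"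
    using one_minus_r_le[of m] M1 by (intro power_mono) auto
  finally have "A_lo / 2 * Q ^ m \<le> r m ^ y * A_lo * Q ^ m"
    using A_lo_pos Q_pos by (simp add: mult_right_mono)
  also have "\<dots> \<le> moment_piece m y" by (rule piece_lower)
  also have "\<dots> \<le> (\<Sum>k. moment_piece k y)"
    using sum_le_suminf[OF summable_piece, of "{m}" y] piece_nonneg by simp
  finally show ?thesis by (simp add: moment_eq_suminf)
qed

definition decay_exp :: nat where
  "decay_exp = (SOME p. 1 \<le> p \<and> 2 / Q \<le> lac_ratio ^ p)"

lemma decay_exp: "1 \<le> decay_exp" "2 / Q \<le> lac_ratio ^ decay_exp"
proof -
  obtain p where p: "2 / Q < lac_ratio ^ p" using real_arch_pow[OF lac_ratio_gt_1] by blast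
  have "lac_ratio ^ p \<le> lac_ratio ^ (max 1 p)" using lac_ratio_gt_1 by (intro power_increasing) auto
  then have "\<exists>p. 1 \<le> p \<and> 2 / Q \<le> lac_ratio ^ p" using p by (intro exI[of _ "max 1 p"]) auto
  then have "1 \<le> decay_exp \<and> 2 / Q \<le> lac_ratio ^ decay_exp"
    unfolding decay_exp_def by (rule someI_ex)
  then show "1 \<le> decay_exp" "2 / Q \<le> lac_ratio ^ decay_exp" by auto
qed

text \<open>For \<open>y \<ge> M n\<close> and \<open>k < n\<close>, \<open>r (Suc k) ^ y \<le> exp (- y (1 - r (Suc k)))\<close> decays like
  a power of \<open>M (Suc k) / M n\<close>, i.e. geometrically in \<open>n - k\<close> by lacunarity; the exponent
  \<open>decay_exp\<close> makes that rate beat \<open>Q\<close>.\<close>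

lemma r_power_le_geometric:
  assumes "k < n" "real (M n) \<le> real y"
  shows "r (Suc k) ^ y \<le> (2 * real decay_exp) ^ decay_exp * (Q / 2) ^ (n - Suc k)"
proof -
  define j where "j = n - Suc k"
  define p where "p = decay_exp"
  define z where "z = real (M n) / (2 * real (M (Suc k)))"
  have Mk: "1 \<le> M (Suc k)" "1 \<le> M n" using M_ge_1 by auto
  have lac: "lac_ratio ^ j * real (M (Suc k)) \<le> real (M n)"
    using M_add_ge[where n="Suc k" and j=j] assms(1) by (simp add: j_def)
  have "r (Suc k) ^ y \<le> r (Suc k) ^ (M n)"
    using r_nonneg r_less_1 assms(2) by (intro power_decreasing) (auto intro: less_imp_le)
  also have "\<dots> \<le> exp (- ((1 - r (Suc k)) * real (M n)))" by (rule power_le_exp_neg[OF r_nonneg])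
  also have "\<dots> \<le> exp (- z)"
    using mult_right_mono[OF less_imp_le[OF one_minus_r_gt[of "Suc k"]], of "real (M n)"]
    by (simp add: z_def)
  also have "\<dots> \<le> (real p / z) ^ p"
    using Mk decay_exp(1) by (intro exp_neg_le_power) (auto simp: z_def p_def)
  also have "\<dots> = (2 * real p * (real (M (Suc k)) / real (M n))) ^ p"
    using Mk by (simp add: z_def field_simps)
  also have "\<dots> \<le> (2 * real p * (1 / lac_ratio ^ j)) ^ p"
    using lac Mk lac_ratio_gt_1 by (intro power_mono mult_left_mono) (auto simp: field_simps)
  also have "\<dots> = (2 * real p) ^ p * (1 / lac_ratio ^ p) ^ j"
    by (simp add: power_mult_distrib power_divide power_mult[symmetric] mult.commute)
  also have "\<dots> \<le> (2 * real p) ^ p * (Q / 2) ^ j"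
    using decay_exp(2) Q_pos lac_ratio_gt_1
    by (intro mult_left_mono power_mono) (auto simp: p_def field_simps)
  finally show ?thesis by (simp add: p_def j_def)
qed

definition C_up :: real where
  "C_up = 2 * A_up * (2 * real decay_exp) ^ decay_exp / Q + A_up / (1 - Q)"

lemma C_up_pos: "0 < C_up"
  using A_up_pos Q_pos Q_less_1 by (simp add: C_up_def add_nonneg_pos)

lemma head_pieces_le:
  assumes "real (M n) \<le> real y"
  shows "(\<Sum>k<n. r (Suc k) ^ y * A_up * Q ^ k) \<le> 2 * A_up * (2 * real decay_exp) ^ decay_exp / Q * Q ^ n"
proof (cases n)
  case (Suc n')
  define D where "D = A_up * (2 * real decay_exp) ^ decay_exp * Q ^ n'"
  have "r (Suc k) ^ y * A_up * Q ^ k \<le> D * (1 / 2) ^ (n - Suc k)" if "k < n" for k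
  proof -
    have "r (Suc k) ^ y * A_up * Q ^ k \<le> (2 * real decay_exp) ^ decay_exp * (Q / 2) ^ (n - Suc k) * A_up * Q ^ k"
      using r_power_le_geometric[OF that assms] A_up_pos Q_pos by (intro mult_right_mono) auto
    also have "\<dots> = D * (1 / 2) ^ (n - Suc k)"
      using that Suc by (simp add: D_def power_divide power_add[symmetric] field_simps)
    finally show ?thesis .
  qed
  then have "(\<Sum>k<n. r (Suc k) ^ y * A_up * Q ^ k) \<le> D * (\<Sum>k<n. (1 / 2) ^ (n - Suc k))"
    by (auto simp: sum_distrib_left intro!: sum_mono)
  also have "\<dots> \<le> D * 2"
  proof (rule mult_left_mono)
    have "(\<Sum>k<n. (1 / 2 :: real) ^ (n - Suc k)) = (\<Sum>k<n. (1 / 2) ^ k)"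
      by (rule sum.nat_diff_reindex)
    also have "\<dots> \<le> (\<Sum>k. (1 / 2) ^ k)" by (rule sum_le_suminf) auto
    finally show "(\<Sum>k<n. (1 / 2 :: real) ^ (n - Suc k)) \<le> 2" by (simp add: suminf_geometric)
  qed (use A_up_pos Q_pos in \<open>simp add: D_def\<close>)
  finally show ?thesis using Suc Q_pos by (simp add: D_def field_simps)
qed (use A_up_pos Q_pos in simp)

lemma moment_upper:
  assumes "real (M n) \<le> real y"
  shows "moment mu y \<le> C_up * Q ^ n"
proof -
  define b where "b k = r (Suc k) ^ y * A_up * Q ^ k" for k
  have b_nonneg: "0 \<le> b k" for k
    using r_nonneg A_up_pos Q_pos by (simp add: b_def)
  have b_le: "b k \<le> A_up * Q ^ k" for k
  proof -
    have "r (Suc k) ^ y \<le> 1" using r_nonneg r_less_1 by (intro power_le_one) (auto intro: less_imp_le)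
    then show ?thesis
      using A_up_pos Q_pos mult_right_mono[of "r (Suc k) ^ y" 1 "A_up * Q ^ k"]
      by (simp add: b_def mult_ac)
  qed
  have sb: "summable b"
    by (rule summable_comparison_test'[OF summable_geometric_A_up, of 0]) (use b_le b_nonneg in auto)
  have "moment mu y \<le> suminf b"
    unfolding moment_eq_suminf by (rule suminf_le[OF _ summable_piece sb]) (simp add: b_def piece_upper)
  also have "\<dots> = (\<Sum>k. b (k + n)) + (\<Sum>k<n. b k)" by (rule suminf_split_initial_segment[OF sb])
  also have "(\<Sum>k. b (k + n)) \<le> (\<Sum>k. (A_up * Q ^ n) * Q ^ k)"
  proof (rule suminf_le)
    show "summable (\<lambda>k. b (k + n))" using sb by (simp add: summable_iff_shift)
    show "summable (\<lambda>k. (A_up * Q ^ n) * Q ^ k)" using Q_pos Q_less_1 by (intro summable_mult) simp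
    show "b (k + n) \<le> A_up * Q ^ n * Q ^ k" for k using b_le[of "k + n"] by (simp add: power_add mult_ac)
  qed
  also have "\<dots> = A_up / (1 - Q) * Q ^ n"
    using Q_pos Q_less_1 by (simp add: suminf_mult suminf_geometric)
  also have "(\<Sum>k<n. b k) \<le> 2 * A_up * (2 * real decay_exp) ^ decay_exp / Q * Q ^ n"
    unfolding b_def by (rule head_pieces_le[OF assms])
  finally show ?thesis by (simp add: C_up_def algebra_simps)
qed

end

section \<open>Second differences of ramps\<close>

definition diff2 :: "(nat \<Rightarrow> real) \<Rightarrow> nat \<Rightarrow> real" where
  "diff2 l s = l s - 2 * l (Suc s) + l (Suc (Suc s))"

text \<open>Summation by parts twice: a sequence vanishing at \<open>B + 1\<close> and \<open>B + 2\<close> is a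
  superposition of the hinge functions \<open>j \<mapsto> s + 1 - j\<close> with weights \<open>diff2 l s\<close>.\<close>

lemma sum_hinge_diff2:
  "j \<le> Suc B \<Longrightarrow> (\<Sum>s\<le>B. real (s + 1 - j) * diff2 l s)
     = l j - real (B + 2 - j) * l (Suc B) + real (B + 1 - j) * l (Suc (Suc B))"
proof (induction B arbitrary: j)
  case 0
  then have "j = 0 \<or> j = 1" by auto
  then show ?case by (auto simp: diff2_def)
next
  case (Suc B)
  show ?case
  proof (cases "j \<le> Suc B")
    case True
    then show ?thesis
      using Suc.IH[OF True] by (simp add: diff2_def of_nat_diff algebra_simps)
  next
    case False
    then have j: "j = Suc (Suc B)" using Suc.prems by simp
    have "(\<Sum>s\<le>Suc B. real (s + 1 - j) * diff2 l s) = 0"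
      by (intro sum.neutral) (auto simp: j)
    then show ?thesis by (simp add: j)
  qed
qed

lemma hinge_expansion:
  assumes "l (Suc B) = 0" "l (Suc (Suc B)) = 0" "j \<le> Suc B"
  shows "l j = (\<Sum>s\<le>B. real (s + 1 - j) * diff2 l s)"
  using sum_hinge_diff2[OF assms(3), of l] assms(1,2) by simp

text \<open>A finitely supported extension of \<open>u\<close> from \<open>[a, b]\<close> whose second differences are
  those of \<open>u\<close> except at two kinks.\<close>

definition ramp :: "nat \<Rightarrow> nat \<Rightarrow> (nat \<Rightarrow> real) \<Rightarrow> nat \<Rightarrow> real" where
  "ramp a b u j = (if j \<le> a then u a + (real a - real j) * (u a - u (Suc a))
     else if j \<le> b then u j else if j \<le> 2 * b then u b * (2 * real b - real j) / real b else 0)"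

context
  fixes a b :: nat and u :: "nat \<Rightarrow> real"
  assumes a_less_b: "a < b"
begin

lemma ramp_left: "j \<le> Suc a \<Longrightarrow> ramp a b u j = u a + (real a - real j) * (u a - u (Suc a))"
  using a_less_b by (cases "j \<le> a") (auto simp: ramp_def le_Suc_eq)

lemma ramp_middle: "a \<le> j \<Longrightarrow> j \<le> b \<Longrightarrow> ramp a b u j = u j"
  by (cases "j \<le> a") (auto simp: ramp_def)

lemma ramp_right: "b \<le> j \<Longrightarrow> j \<le> 2 * b \<Longrightarrow> ramp a b u j = u b * (2 * real b - real j) / real b"
  using a_less_b by (cases "j = b") (auto simp: ramp_def)

lemma ramp_zero: "2 * b \<le> j \<Longrightarrow> ramp a b u j = 0"
  using a_less_b by (auto simp: ramp_def)

lemma ramp_hinge_expansion: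
  "j \<le> Suc (2 * b) \<Longrightarrow> ramp a b u j = (\<Sum>s\<le>2 * b. real (s + 1 - j) * diff2 (ramp a b u) s)"
  by (rule hinge_expansion) (auto intro: ramp_zero)

lemma diff2_ramp_left: "s < a \<Longrightarrow> diff2 (ramp a b u) s = 0"
  by (simp add: diff2_def ramp_left algebra_simps)

lemma diff2_ramp_middle: "a \<le> s \<Longrightarrow> s + 2 \<le> b \<Longrightarrow> diff2 (ramp a b u) s = diff2 u s"
  by (simp add: diff2_def ramp_middle)

lemma diff2_ramp_kink_b: "diff2 (ramp a b u) (b - 1) = (u (b - 1) - u b) - u b / real b"
proof -
  have "ramp a b u (b - 1) = u (b - 1)" "ramp a b u (Suc (b - 1)) = u b"
    using a_less_b by (auto intro!: ramp_middle)
  moreover have "ramp a b u (Suc (Suc (b - 1))) = u b * (real b - 1) / real b"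
    using a_less_b by (subst ramp_right) (auto simp: of_nat_diff)
  ultimately show ?thesis using a_less_b by (simp add: diff2_def field_simps)
qed

lemma diff2_ramp_right: "b \<le> s \<Longrightarrow> s + 2 \<le> 2 * b \<Longrightarrow> diff2 (ramp a b u) s = 0"
  using a_less_b by (simp add: diff2_def ramp_right field_simps)

lemma diff2_ramp_kink_2b: "diff2 (ramp a b u) (2 * b - 1) = u b / real b"
proof -
  have "ramp a b u (2 * b - 1) = u b * (2 * real b - real (2 * b - 1)) / real b"
    using a_less_b by (intro ramp_right) auto
  moreover have "2 * real b - real (2 * b - 1) = 1" using a_less_b by (simp add: of_nat_diff)
  moreover have "ramp a b u (Suc (2 * b - 1)) = 0" "ramp a b u (Suc (Suc (2 * b - 1))) = 0"
    using a_less_b by (auto intro: ramp_zero)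
  ultimately show ?thesis by (simp add: diff2_def)
qed

lemma diff2_ramp_beyond: "2 * b \<le> s \<Longrightarrow> diff2 (ramp a b u) s = 0"
  by (simp add: diff2_def ramp_zero)

lemma weighted_diff2_ramp_le:
  "(\<Sum>s\<le>2 * b. real (s + 1) * \<bar>diff2 (ramp a b u) s\<bar>)
     \<le> (\<Sum>s\<in>{a..<b - 1}. real (s + 1) * \<bar>diff2 u s\<bar>) + real b * \<bar>u (b - 1) - u b\<bar> + 3 * \<bar>u b\<bar>"
proof -
  have b: "1 \<le> b" using a_less_b by simp
  define g where "g s = (if s \<in> {a..<b - 1} then real (s + 1) * \<bar>diff2 u s\<bar> else 0)
     + (if s = b - 1 then real b * \<bar>u (b - 1) - u b\<bar> + \<bar>u b\<bar> else 0)
     + (if s = 2 * b - 1 then 2 * \<bar>u b\<bar> else 0)" for s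
  have "real (s + 1) * \<bar>diff2 (ramp a b u) s\<bar> \<le> g s" for s
  proof -
    have g: "0 \<le> g s" by (simp add: g_def)
    consider "s < a" | "a \<le> s \<and> s + 2 \<le> b" | "s = b - 1" | "b \<le> s \<and> s + 2 \<le> 2 * b"
      | "s = 2 * b - 1" | "2 * b \<le> s"
      using b by linarith
    then show ?thesis
    proof cases
      case 3
      have "real b * \<bar>(u (b - 1) - u b) - u b / real b\<bar>
          \<le> real b * (\<bar>u (b - 1) - u b\<bar> + \<bar>u b\<bar> / real b)"
        using abs_triangle_ineq4[of "u (b - 1) - u b" "u b / real b"]
        by (intro mult_left_mono) (auto simp: abs_divide)
      also have "\<dots> = real b * \<bar>u (b - 1) - u b\<bar> + \<bar>u b\<bar>" using b by (simp add: field_simps)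
      finally have "real b * \<bar>(u (b - 1) - u b) - u b / real b\<bar> \<le> real b * \<bar>u (b - 1) - u b\<bar> + \<bar>u b\<bar>" .
      moreover have "b - 1 \<noteq> 2 * b - 1" "real (b - 1 + 1) = real b" using b by auto
      ultimately show ?thesis unfolding 3 g_def diff2_ramp_kink_b by simp
    next
      case 5
      have "real (2 * b - 1 + 1) * \<bar>u b / real b\<bar> = 2 * \<bar>u b\<bar>"
        using b by (simp add: of_nat_diff abs_divide)
      moreover have "2 * b - 1 \<noteq> b - 1" "2 * b - 1 \<notin> {a..<b - 1}" using b by auto
      ultimately show ?thesis unfolding 5 g_def diff2_ramp_kink_2b by simp
    qed (use g in \<open>auto simp: g_def diff2_ramp_left diff2_ramp_middle diff2_ramp_right
        diff2_ramp_beyond\<close>)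
  qed
  then have "(\<Sum>s\<le>2 * b. real (s + 1) * \<bar>diff2 (ramp a b u) s\<bar>) \<le> (\<Sum>s\<le>2 * b. g s)"
    by (intro sum_mono)
  also have "\<dots> = (\<Sum>s\<in>{a..<b - 1}. real (s + 1) * \<bar>diff2 u s\<bar>)
      + (real b * \<bar>u (b - 1) - u b\<bar> + \<bar>u b\<bar>) + 2 * \<bar>u b\<bar>"
  proof -
    have "(\<Sum>s\<le>2 * b. if s \<in> {a..<b - 1} then real (s + 1) * \<bar>diff2 u s\<bar> else 0)
        = (\<Sum>s\<in>{a..<b - 1}. real (s + 1) * \<bar>diff2 u s\<bar>)"
      by (rule sum.mono_neutral_cong_right) auto
    then show ?thesis unfolding g_def sum.distrib using b by (simp add: sum.delta)
  qed
  finally show ?thesis by simp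
qed

end

lemma sum_weighted_diff_telescope:
  fixes d :: "nat \<Rightarrow> real"
  shows "(\<Sum>s\<in>{a..<a + 1 + L}. real (s + 1) * (d s - d (Suc s)))
    = real (a + 1) * d a - real (a + 1 + L) * d (a + 1 + L) + (\<Sum>s\<in>{a + 1..<a + 1 + L}. d s)"
proof (induction L)
  case (Suc L)
  have "{a..<a + 1 + Suc L} = insert (a + 1 + L) {a..<a + 1 + L}"
    "{a + 1..<a + 1 + Suc L} = insert (a + 1 + L) {a + 1..<a + 1 + L}" by auto
  then show ?case using Suc by (simp add: algebra_simps)
qed (simp add: algebra_simps)

lemma abs_diff2_inverse_le:
  fixes x y z L :: real
  assumes L: "0 < L" "L \<le> x" "L \<le> y" "L \<le> z"
    and e: "0 \<le> x - 2 * y + z" and d: "0 \<le> x - y" "0 \<le> y - z"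
  shows "\<bar>1 / x - 2 / y + 1 / z\<bar> \<le> (x - 2 * y + z) / L\<^sup>2 + (x - y) * ((x - y) + (y - z)) / L ^ 3"
proof -
  have pos: "0 < x" "0 < y" "0 < z" using L by linarith+
  have "1 / x - 2 / y + 1 / z
      = (x - y) * ((x - y) + (y - z)) / (y * (x * z)) - (x - 2 * y + z) / (y * z)"
    using pos by (simp add: field_simps)
  moreover have "(x - 2 * y + z) / (y * z) \<le> (x - 2 * y + z) / (L * L)"
    using L e pos by (intro divide_left_mono mult_mono) auto
  moreover have "(x - y) * ((x - y) + (y - z)) / (y * (x * z)) \<le> (x - y) * ((x - y) + (y - z)) / (L * (L * L))"
    using L d pos by (intro divide_left_mono mult_mono) (auto intro: mult_pos_pos)
  moreover have "0 \<le> (x - 2 * y + z) / (y * z)" "0 \<le> (x - y) * ((x - y) + (y - z)) / (y * (x * z))"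
    using e d pos by auto
  ultimately show ?thesis by (simp add: power2_eq_square power3_eq_cube abs_le_iff)
qed

context
  fixes a b :: nat and m :: "nat \<Rightarrow> real" and U :: real
  assumes a_less_b: "a < b"
    and decreasing: "\<And>s. m (Suc s) \<le> m s"
    and convex: "\<And>s. 0 \<le> diff2 m s"
    and nonneg: "\<And>s. 0 \<le> m s"
    and bounded: "\<And>s. a \<le> s \<Longrightarrow> m s \<le> U"
    and diff_bounded: "\<And>s. a \<le> s \<Longrightarrow> real (s + 1) * (m s - m (Suc s)) \<le> 2 * U"
begin

lemma U_nonneg: "0 \<le> U"
  using nonneg[of a] bounded[of a] by simp

lemma sum_diff_le: "(\<Sum>s\<in>{a..<c}. m s - m (Suc s)) \<le> U"
proof (cases "a \<le> c")
  case True
  have "(\<Sum>s\<in>{a..<c}. (- m) (Suc s) - (- m) s) = (- m) c - (- m) a"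
    by (rule sum_Suc_diff'[OF True])
  then show ?thesis using nonneg[of c] bounded[of a] by simp
qed (simp add: U_nonneg)

lemma weighted_diff2_sum_le: "(\<Sum>s\<in>{a..<c}. real (s + 1) * diff2 m s) \<le> 3 * U"
proof (cases "a < c")
  case True
  then obtain L where c: "c = a + 1 + L" by (metis add.commute add_Suc less_iff_Suc_add plus_1_eq_Suc)
  have "(\<Sum>s\<in>{a..<c}. real (s + 1) * diff2 m s)
     = real (a + 1) * (m a - m (Suc a)) - real (a + 1 + L) * (m (a + 1 + L) - m (a + 2 + L))
       + (\<Sum>s\<in>{a + 1..<a + 1 + L}. m s - m (Suc s))"
    unfolding c using sum_weighted_diff_telescope[where a=a and L=L and d="\<lambda>s. m s - m (Suc s)"]
    by (simp add: diff2_def algebra_simps)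
  moreover have "(\<Sum>s\<in>{a + 1..<a + 1 + L}. m s - m (Suc s)) \<le> U"
    using sum_diff_le[of "a + 1 + L"] sum.atLeast_Suc_lessThan[of a "a + 1 + L" "\<lambda>s. m s - m (Suc s)"]
      decreasing[of a] by simp
  moreover have "0 \<le> real (a + 1 + L) * (m (a + 1 + L) - m (a + 2 + L))"
    using decreasing[of "a + 1 + L"] by simp
  ultimately show ?thesis using diff_bounded[of a] by simp
qed (simp add: U_nonneg)

lemma weighted_diff2_ramp_quotient_le:
  assumes c: "0 < c"
  shows "(\<Sum>s\<le>2 * b. real (s + 1) * \<bar>diff2 (ramp a b (\<lambda>s. m s / c)) s\<bar>) \<le> 8 * U / c"
proof -
  have "diff2 (\<lambda>s. m s / c) s = diff2 m s / c" for s
    by (simp add: diff2_def diff_divide_distrib add_divide_distrib)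
  then have diff2_div: "real (s + 1) * \<bar>diff2 (\<lambda>s. m s / c) s\<bar> = real (s + 1) * diff2 m s / c" for s
    using c convex[of s] by simp
  have "(\<Sum>s\<in>{a..<b - 1}. real (s + 1) * \<bar>diff2 (\<lambda>s. m s / c) s\<bar>) \<le> 3 * U / c"
    unfolding diff2_div sum_divide_distrib[symmetric]
    using weighted_diff2_sum_le[of "b - 1"] c by (simp add: divide_right_mono)
  moreover have "real b * \<bar>m (b - 1) / c - m b / c\<bar> \<le> 2 * U / c"
    using diff_bounded[of "b - 1"] decreasing[of "b - 1"] a_less_b c
    by (simp add: diff_divide_distrib[symmetric] abs_divide of_nat_diff divide_right_mono)
  moreover have "3 * \<bar>m b / c\<bar> \<le> 3 * U / c"
    using nonneg[of b] bounded[of b] a_less_b c by (simp add: abs_divide divide_right_mono)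
  ultimately have "(\<Sum>s\<le>2 * b. real (s + 1) * \<bar>diff2 (ramp a b (\<lambda>s. m s / c)) s\<bar>)
      \<le> 3 * U / c + 2 * U / c + 3 * U / c"
    using weighted_diff2_ramp_le[OF a_less_b, of "\<lambda>s. m s / c"] by simp
  then show ?thesis by (simp add: add_divide_distrib[symmetric])
qed

context
  fixes L :: real
  assumes L_pos: "0 < L" and L_le: "\<And>s. s \<le> b \<Longrightarrow> L \<le> m s"
begin

lemma weighted_abs_diff2_inverse_le:
  assumes "a \<le> s" "s + 2 \<le> b"
  shows "real (s + 1) * \<bar>diff2 (\<lambda>s. 1 / m s) s\<bar>
    \<le> real (s + 1) * diff2 m s / L\<^sup>2 + 2 * U * (m s - m (Suc (Suc s))) / L ^ 3"
proof -
  have "\<bar>diff2 (\<lambda>s. 1 / m s) s\<bar> \<le> diff2 m s / L\<^sup>2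
      + (m s - m (Suc s)) * (m s - m (Suc (Suc s))) / L ^ 3"
    using abs_diff2_inverse_le[OF L_pos, of "m s" "m (Suc s)" "m (Suc (Suc s))"] assms L_le
      convex[of s] decreasing[of s] decreasing[of "Suc s"]
    by (simp add: diff2_def)
  then have "real (s + 1) * \<bar>diff2 (\<lambda>s. 1 / m s) s\<bar> \<le> real (s + 1) * (diff2 m s / L\<^sup>2
      + (m s - m (Suc s)) * (m s - m (Suc (Suc s))) / L ^ 3)"
    by (rule mult_left_mono) simp
  also have "\<dots> = real (s + 1) * diff2 m s / L\<^sup>2
      + (real (s + 1) * (m s - m (Suc s))) * (m s - m (Suc (Suc s))) / L ^ 3"
    by (simp add: algebra_simps)
  also have "\<dots> \<le> real (s + 1) * diff2 m s / L\<^sup>2 + 2 * U * (m s - m (Suc (Suc s))) / L ^ 3"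
    using diff_bounded[OF assms(1)] decreasing[of s] decreasing[of "Suc s"] L_pos
    by (intro add_left_mono divide_right_mono mult_right_mono) auto
  finally show ?thesis .
qed

lemma weighted_diff2_inverse_sum_le:
  "(\<Sum>s\<in>{a..<b - 1}. real (s + 1) * \<bar>diff2 (\<lambda>s. 1 / m s) s\<bar>) \<le> 3 * U / L\<^sup>2 + 4 * U\<^sup>2 / L ^ 3"
proof -
  have "(\<Sum>s\<in>{a..<b - 1}. real (s + 1) * \<bar>diff2 (\<lambda>s. 1 / m s) s\<bar>)
      \<le> (\<Sum>s\<in>{a..<b - 1}. (1 / L\<^sup>2) * (real (s + 1) * diff2 m s)
           + (2 * U / L ^ 3) * (m s - m (Suc (Suc s))))"
    by (intro sum_mono) (use weighted_abs_diff2_inverse_le in auto)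
  also have "\<dots> = (1 / L\<^sup>2) * (\<Sum>s\<in>{a..<b - 1}. real (s + 1) * diff2 m s)
      + (2 * U / L ^ 3) * (\<Sum>s\<in>{a..<b - 1}. m s - m (Suc (Suc s)))"
    by (simp only: sum.distrib sum_distrib_left)
  also have "\<dots> \<le> (1 / L\<^sup>2) * (3 * U) + (2 * U / L ^ 3) * (2 * U)"
  proof -
    have "(\<Sum>s\<in>{a..<b - 1}. m (Suc s) - m (Suc (Suc s))) \<le> (\<Sum>s\<in>{a..<b}. m s - m (Suc s))"
      using a_less_b decreasing sum.atLeast_Suc_lessThan[of a b "\<lambda>s. m s - m (Suc s)"]
        sum.shift_bounds_Suc_ivl[of "\<lambda>s. m s - m (Suc s)" a "b - 1"]
      by (simp add: add_increasing)
    moreover have "(\<Sum>s\<in>{a..<b - 1}. m s - m (Suc (Suc s)))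
        = (\<Sum>s\<in>{a..<b - 1}. m s - m (Suc s)) + (\<Sum>s\<in>{a..<b - 1}. m (Suc s) - m (Suc (Suc s)))"
      by (subst sum.distrib[symmetric]) simp
    ultimately show ?thesis
      using weighted_diff2_sum_le[of "b - 1"] sum_diff_le[of "b - 1"] sum_diff_le[of b] U_nonneg L_pos
      by (intro add_mono mult_left_mono) auto
  qed
  finally show ?thesis by (simp add: power2_eq_square)
qed

lemma m_pos_upto_b: "s \<le> b \<Longrightarrow> 0 < m s"
  using L_le L_pos by (meson less_le_trans)

lemma weighted_jump_inverse_le:
  assumes c: "0 \<le> c"
  shows "real b * \<bar>c / m (b - 1) - c / m b\<bar> \<le> c * (2 * U / L\<^sup>2)"
proof -
  have "c / m b - c / m (b - 1) = c * (m (b - 1) - m b) / (m (b - 1) * m b)"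
    using m_pos_upto_b[of b] m_pos_upto_b[of "b - 1"] by (simp add: field_simps)
  moreover have "0 \<le> c * (m (b - 1) - m b) / (m (b - 1) * m b)"
    using m_pos_upto_b[of b] m_pos_upto_b[of "b - 1"] decreasing[of "b - 1"] a_less_b c by simp
  ultimately have "\<bar>c / m (b - 1) - c / m b\<bar> = c * (m (b - 1) - m b) / (m (b - 1) * m b)"
    by (metis abs_minus_commute abs_of_nonneg)
  then have "real b * \<bar>c / m (b - 1) - c / m b\<bar>
      = c * (real b * (m (b - 1) - m b)) / (m (b - 1) * m b)"
    by (simp add: mult.left_commute)
  also have "\<dots> \<le> c * (2 * U) / (L * L)"
  proof (rule frac_le)
    have "real b * (m (b - 1) - m b) \<le> 2 * U" using diff_bounded[of "b - 1"] a_less_b by simp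
    then show "c * (real b * (m (b - 1) - m b)) \<le> c * (2 * U)" using c by (rule mult_left_mono)
    show "L * L \<le> m (b - 1) * m b" using L_le[of b] L_le[of "b - 1"] L_pos by (intro mult_mono) auto
  qed (use c U_nonneg L_pos in auto)
  finally show ?thesis by (simp add: power2_eq_square)
qed

lemma weighted_diff2_ramp_inverse_le:
  assumes c: "0 \<le> c"
  shows "(\<Sum>s\<le>2 * b. real (s + 1) * \<bar>diff2 (ramp a b (\<lambda>s. c / m s)) s\<bar>)
     \<le> c * (5 * U / L\<^sup>2 + 4 * U\<^sup>2 / L ^ 3 + 3 / L)"
proof -
  have "diff2 (\<lambda>s. c / m s) s = c * diff2 (\<lambda>s. 1 / m s) s" for s
    by (simp add: diff2_def divide_inverse algebra_simps)
  then have "(\<Sum>s\<in>{a..<b - 1}. real (s + 1) * \<bar>diff2 (\<lambda>s. c / m s) s\<bar>)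
      = c * (\<Sum>s\<in>{a..<b - 1}. real (s + 1) * \<bar>diff2 (\<lambda>s. 1 / m s) s\<bar>)"
    using c by (simp add: abs_mult sum_distrib_left mult_ac)
  also have "\<dots> \<le> c * (3 * U / L\<^sup>2 + 4 * U\<^sup>2 / L ^ 3)"
    using c by (intro mult_left_mono weighted_diff2_inverse_sum_le)
  finally have mid: "(\<Sum>s\<in>{a..<b - 1}. real (s + 1) * \<bar>diff2 (\<lambda>s. c / m s) s\<bar>)
      \<le> c * (3 * U / L\<^sup>2 + 4 * U\<^sup>2 / L ^ 3)" .
  have end_value: "3 * \<bar>c / m b\<bar> \<le> c * (3 / L)"
    using m_pos_upto_b[of b] L_le[of b] L_pos c by (simp add: abs_divide frac_le)
  have "(\<Sum>s\<le>2 * b. real (s + 1) * \<bar>diff2 (ramp a b (\<lambda>s. c / m s)) s\<bar>)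
      \<le> c * (3 * U / L\<^sup>2 + 4 * U\<^sup>2 / L ^ 3) + c * (2 * U / L\<^sup>2) + c * (3 / L)"
    using weighted_diff2_ramp_le[OF a_less_b, of "\<lambda>s. c / m s"] mid weighted_jump_inverse_le[OF c]
      end_value by linarith
  also have "\<dots> = c * (5 * U / L\<^sup>2 + 4 * U\<^sup>2 / L ^ 3 + 3 / L)"
    by (simp add: field_simps)
  finally show ?thesis .
qed

end

end

section \<open>Block estimates\<close>

lemma le_mult_const_mono: "x \<le> a * y \<Longrightarrow> 0 \<le> y \<Longrightarrow> a \<le> C \<Longrightarrow> x \<le> C * (y :: real)"
  by (meson mult_right_mono order_trans)

lemma diskr_scale: "diskr (\<lambda>z. a * f z) = (\<lambda>z. a * diskr f z)"
  by (auto simp: diskr_def)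

lemma poly_fun_scale: "poly_fun (\<lambda>j. a * c j) D = (\<lambda>z. a * poly_fun c D z)"
  by (auto simp: poly_fun_def sum_distrib_left mult_ac)

lemma poly_fun_multiplier_cong:
  assumes "\<And>j. j < D \<Longrightarrow> c j \<noteq> 0 \<Longrightarrow> x j = y j"
  shows "poly_fun (\<lambda>j. x j * c j) D = poly_fun (\<lambda>j. y j * c j) D"
  unfolding poly_fun_def by (intro ext sum.cong refl) (use assms in force)

lemma hinge_power_bound:
  fixes x :: real
  assumes "0 \<le> x" "x \<le> 1"
  shows "real (s + 1) * x ^ s * (1 - x) \<le> 1"
proof -
  have "real (s + 1) * x ^ s = (\<Sum>i<s + 1. x ^ s)" by simp
  also have "\<dots> \<le> (\<Sum>i<s + 1. x ^ (s + 1 - Suc i))"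
    using assms by (intro sum_mono power_decreasing) auto
  finally have "real (s + 1) * x ^ s * (1 - x) \<le> (\<Sum>i<s + 1. x ^ (s + 1 - Suc i)) * (1 - x)"
    using assms by (intro mult_right_mono) auto
  also have "\<dots> = 1 - x ^ (s + 1)" by (metis mult.commute one_diff_power_eq')
  finally show ?thesis using zero_le_power[of x "s + 1"] assms by linarith
qed

lemma weighted_odd_power_diff_le:
  fixes x :: real
  assumes "0 \<le> x" "x \<le> 1"
  shows "real (s + 1) * (x ^ (2 * s + 1) - x ^ (2 * s + 3)) \<le> 2 * x ^ (s + 1)"
proof -
  have "2 * s + 1 = (s + 1) + s" "2 * s + 3 = ((s + 1) + s) + 2" by simp_all
  then have "x ^ (2 * s + 1) = x ^ (s + 1) * x ^ s" "x ^ (2 * s + 3) = x ^ (s + 1) * x ^ s * (x * x)"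
    by (simp_all only: power_add power2_eq_square)
  then have "x ^ (2 * s + 1) - x ^ (2 * s + 3) = x ^ (s + 1) * (1 + x) * (x ^ s * (1 - x))"
    by (simp add: algebra_simps)
  then have "real (s + 1) * (x ^ (2 * s + 1) - x ^ (2 * s + 3))
      = x ^ (s + 1) * (1 + x) * (real (s + 1) * x ^ s * (1 - x))" by (simp add: mult_ac)
  also have "\<dots> \<le> x ^ (s + 1) * 2 * 1"
    using assms hinge_power_bound[OF assms, of s] by (intro mult_mono) auto
  finally show ?thesis by simp
qed

context lacunary_weight
begin

definition odd_moment :: "nat \<Rightarrow> real" where
  "odd_moment s = moment mu (2 * s + 1)"

lemma odd_moment_nonneg: "0 \<le> odd_moment s"
  unfolding odd_moment_def by (rule moment_nonneg)

lemma odd_moment_Suc_le: "odd_moment (Suc s) \<le> odd_moment s"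
  unfolding odd_moment_def by (rule moment_antimono) simp

lemma set_integrable_odd_moment_diff:
  "set_integrable lborel {0..<1} (\<lambda>x. (x ^ (2 * s + 1) - x ^ (2 * s + 3)) * mu x)"
  using set_integral_diff(1)[OF set_integrable_moment[of "2 * s + 1"] set_integrable_moment[of "2 * s + 3"]]
  by (simp add: left_diff_distrib)

lemma odd_moment_diff:
  "odd_moment s - odd_moment (Suc s) = (LBINT x:{0..<1}. (x ^ (2 * s + 1) - x ^ (2 * s + 3)) * mu x)"
proof -
  have "2 * Suc s + 1 = 2 * s + 3" by simp
  then have "odd_moment s - odd_moment (Suc s) = moment mu (2 * s + 1) - moment mu (2 * s + 3)"
    unfolding odd_moment_def by (simp only:)
  also have "\<dots> = (LBINT x:{0..<1}. x ^ (2 * s + 1) * mu x - x ^ (2 * s + 3) * mu x)"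
    unfolding moment_def by (rule set_integral_diff(2)[OF set_integrable_moment set_integrable_moment, symmetric])
  finally show ?thesis by (simp only: left_diff_distrib)
qed

lemma odd_moment_convex: "0 \<le> diff2 odd_moment s"
proof -
  have "odd_moment (Suc s) - odd_moment (Suc (Suc s)) \<le> odd_moment s - odd_moment (Suc s)"
    unfolding odd_moment_diff
  proof (rule set_integral_mono[OF set_integrable_odd_moment_diff set_integrable_odd_moment_diff])
    fix x :: real assume x: "x \<in> {0..<1}"
    have "x ^ (2 * s + 3) \<le> x ^ (2 * s + 1)" using x by (intro power_decreasing) auto
    then have nonneg: "0 \<le> x ^ (2 * s + 1) - x ^ (2 * s + 3)" by simp
    have "x ^ (2 * Suc s + 1) - x ^ (2 * Suc s + 3) = x\<^sup>2 * (x ^ (2 * s + 1) - x ^ (2 * s + 3))"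
      by (simp add: power_add[symmetric] algebra_simps)
    also have "\<dots> \<le> x ^ (2 * s + 1) - x ^ (2 * s + 3)"
      using x nonneg by (intro mult_left_le_one_le) (auto simp: power_le_one)
    finally show "(x ^ (2 * Suc s + 1) - x ^ (2 * Suc s + 3)) * mu x
        \<le> (x ^ (2 * s + 1) - x ^ (2 * s + 3)) * mu x"
      using mu_nonneg[OF x] by (intro mult_right_mono)
  qed
  then show ?thesis by (simp add: diff2_def)
qed

lemma weighted_odd_moment_diff_le:
  "real (s + 1) * (odd_moment s - odd_moment (Suc s)) \<le> 2 * moment mu (s + 1)"
proof -
  have "real (s + 1) * (odd_moment s - odd_moment (Suc s))
      = (LBINT x:{0..<1}. real (s + 1) * ((x ^ (2 * s + 1) - x ^ (2 * s + 3)) * mu x))"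
    unfolding odd_moment_diff by simp
  also have "\<dots> \<le> (LBINT x:{0..<1}. 2 * (x ^ (s + 1) * mu x))"
  proof (rule set_integral_mono)
    show "set_integrable lborel {0..<1} (\<lambda>x. real (s + 1) * ((x ^ (2 * s + 1) - x ^ (2 * s + 3)) * mu x))"
      using set_integrable_odd_moment_diff by simp
    show "set_integrable lborel {0..<1} (\<lambda>x. 2 * (x ^ (s + 1) * mu x))"
      using set_integrable_moment by (intro set_integrable_mult_right)
    fix x :: real assume x: "x \<in> {0..<1}"
    then have "real (s + 1) * (x ^ (2 * s + 1) - x ^ (2 * s + 3)) \<le> 2 * x ^ (s + 1)"
      by (intro weighted_odd_power_diff_le) auto
    from mult_right_mono[OF this mu_nonneg[OF x]]
    show "real (s + 1) * ((x ^ (2 * s + 1) - x ^ (2 * s + 3)) * mu x) \<le> 2 * (x ^ (s + 1) * mu x)"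
      by (simp add: mult_ac)
  qed
  also have "\<dots> = 2 * moment mu (s + 1)" by (simp add: moment_def)
  finally show ?thesis .
qed

lemma M_prev_less: "M_prev w K n < M (n + N)"
proof (cases n)
  case 0
  then show ?thesis using M_ge_1[of N] by (simp add: M_prev_def)
next
  case (Suc n')
  have "M n' < M (Suc n')" by (rule M_less_Suc)
  also have "M (Suc n') \<le> M (n + N)" using Suc by (intro M_mono) simp
  finally show ?thesis using Suc by (simp add: M_prev_def)
qed

lemma moment_beyond_M_prev_le: "M_prev w K n < y \<Longrightarrow> moment mu y \<le> (C_up / Q) * Q ^ n"
proof (cases n)
  case 0
  assume "M_prev w K n < y"
  then have "moment mu y \<le> C_up * Q ^ 0"
    using 0 r_0 by (intro moment_upper) (simp add: M_prev_def M_seq_def)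
  also have "\<dots> \<le> C_up / Q" using C_up_pos Q_pos Q_less_1 by (simp add: field_simps)
  finally show ?thesis using 0 by simp
next
  case (Suc n')
  assume "M_prev w K n < y"
  then have "moment mu y \<le> C_up * Q ^ n'"
    using Suc by (intro moment_upper) (simp add: M_prev_def)
  also have "\<dots> = (C_up / Q) * Q ^ n" using Suc Q_pos by simp
  finally show ?thesis .
qed

definition sixfold_steps :: nat where
  "sixfold_steps = (SOME j. 6 \<le> lac_ratio ^ j)"

lemma M_add_sixfold_steps_ge: "6 * real (M n) \<le> real (M (n + sixfold_steps))"
proof -
  obtain j where "6 < lac_ratio ^ j" using real_arch_pow[OF lac_ratio_gt_1] by blast
  then have "\<exists>j. 6 \<le> lac_ratio ^ j" by (intro exI[of _ j]) simp
  then have "6 \<le> lac_ratio ^ sixfold_steps" unfolding sixfold_steps_def by (rule someI_ex)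
  then have "6 * real (M n) \<le> lac_ratio ^ sixfold_steps * real (M n)" by (intro mult_right_mono) auto
  then show ?thesis using M_add_ge[where n=n and j=sixfold_steps] by linarith
qed

lemma moment_M_lower: "(A_lo / 2 * Q ^ sixfold_steps) * Q ^ n \<le> moment mu (M n)"
  using moment_lower[of "M n" "n + sixfold_steps"] M_add_sixfold_steps_ge[of n] by (simp add: power_add mult_ac)

lemma moment_M_pos: "0 < moment mu (M n)"
proof -
  have "0 < (A_lo / 2 * Q ^ sixfold_steps) * Q ^ n" using A_lo_pos Q_pos by simp
  then show ?thesis using moment_M_lower[of n] by linarith
qed

lemma odd_moment_lower: "s \<le> M (n + N) \<Longrightarrow> (A_lo / 2 * Q ^ (N + sixfold_steps)) * Q ^ n \<le> odd_moment s"
  using moment_lower[of "2 * s + 1" "n + N + sixfold_steps"] M_add_sixfold_steps_ge[of "n + N"] M_ge_1[of "n + N"]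
  by (simp add: odd_moment_def power_add mult_ac)

lemma moment_M_upper: "moment mu (M n) \<le> C_up * Q ^ n"
  by (rule moment_upper) simp

lemma odd_moment_block_bounds:
  assumes "M_prev w K n \<le> s"
  shows "odd_moment s \<le> (C_up / Q) * Q ^ n"
    and "real (s + 1) * (odd_moment s - odd_moment (Suc s)) \<le> 2 * ((C_up / Q) * Q ^ n)"
proof -
  show "odd_moment s \<le> (C_up / Q) * Q ^ n"
    unfolding odd_moment_def by (rule moment_beyond_M_prev_le) (use assms in simp)
  have "moment mu (s + 1) \<le> (C_up / Q) * Q ^ n"
    by (rule moment_beyond_M_prev_le) (use assms in simp)
  with weighted_odd_moment_diff_le[of s]
  show "real (s + 1) * (odd_moment s - odd_moment (Suc s)) \<le> 2 * ((C_up / Q) * Q ^ n)" by simp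
qed

lemma moment_M_le_K_powr: "moment mu (M n) \<le> C_up * K powr (- \<alpha> * real n)"
  using moment_M_upper[of n] by (simp add: Q_power)

lemma K_powr_le_moment_M: "K powr (- \<alpha> * real n) \<le> 1 / (A_lo / 2 * Q ^ sixfold_steps) * moment mu (M n)"
  using moment_M_lower[of n] A_lo_pos Q_pos unfolding Q_power[symmetric] by (simp add: field_simps)

definition I_lower_const :: "nat \<Rightarrow> real" where
  "I_lower_const N = C_up * (5 * (C_up / Q) / (A_lo / 2 * Q ^ (N + sixfold_steps))\<^sup>2
     + 4 * (C_up / Q)\<^sup>2 / (A_lo / 2 * Q ^ (N + sixfold_steps)) ^ 3 + 3 / (A_lo / 2 * Q ^ (N + sixfold_steps)))"

lemma I_lower_const_nonneg: "0 \<le> I_lower_const N"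
  using C_up_pos Q_pos A_lo_pos by (simp add: I_lower_const_def)

definition block_const :: "real \<Rightarrow> nat \<Rightarrow> real" where
  "block_const C0 N = C0 * (8 * (C_up / Q) / (A_lo / 2 * Q ^ sixfold_steps)) + C0 * I_lower_const N
     + C_up + 1 / (A_lo / 2 * Q ^ sixfold_steps)"

lemma block_const_ge:
  assumes "0 < C0"
  shows "C0 * (8 * (C_up / Q) / (A_lo / 2 * Q ^ sixfold_steps)) \<le> block_const C0 N"
    and "C0 * I_lower_const N \<le> block_const C0 N"
    and "C_up \<le> block_const C0 N" and "1 / (A_lo / 2 * Q ^ sixfold_steps) \<le> block_const C0 N"
    and "0 < block_const C0 N"
proof -
  have "0 \<le> C0 * (8 * (C_up / Q) / (A_lo / 2 * Q ^ sixfold_steps))" "0 \<le> C0 * I_lower_const N"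
    "0 < C_up" "0 \<le> 1 / (A_lo / 2 * Q ^ sixfold_steps)"
    using assms C_up_pos Q_pos A_lo_pos I_lower_const_nonneg[of N] by simp_all
  then show "C0 * (8 * (C_up / Q) / (A_lo / 2 * Q ^ sixfold_steps)) \<le> block_const C0 N"
    "C0 * I_lower_const N \<le> block_const C0 N"
    "C_up \<le> block_const C0 N" "1 / (A_lo / 2 * Q ^ sixfold_steps) \<le> block_const C0 N"
    "0 < block_const C0 N"
    unfolding block_const_def by linarith+
qed

lemma weighted_diff2_odd_moment_ramp_le:
  "(\<Sum>s\<le>2 * M (n + N). real (s + 1) *
      \<bar>diff2 (ramp (M_prev w K n) (M (n + N)) (\<lambda>s. odd_moment s / moment mu (M n))) s\<bar>)
    \<le> 8 * ((C_up / Q) / (A_lo / 2 * Q ^ sixfold_steps))"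
proof -
  define \<mu>M where "\<mu>M = moment mu (M n)"
  define U where "U = (C_up / Q) * Q ^ n"
  define R where "R = (C_up / Q) / (A_lo / 2 * Q ^ sixfold_steps)"
  have \<mu>M: "0 < \<mu>M" unfolding \<mu>M_def by (rule moment_M_pos)
  have "(\<Sum>s\<le>2 * M (n + N). real (s + 1) *
      \<bar>diff2 (ramp (M_prev w K n) (M (n + N)) (\<lambda>s. odd_moment s / \<mu>M)) s\<bar>) \<le> 8 * U / \<mu>M"
    by (rule weighted_diff2_ramp_quotient_le[OF M_prev_less odd_moment_Suc_le odd_moment_convex
          odd_moment_nonneg _ _ \<mu>M]) (use odd_moment_block_bounds in \<open>auto simp: U_def\<close>)
  also have "\<dots> \<le> 8 * R"
  proof -
    have "U = R * (A_lo / 2 * Q ^ sixfold_steps * Q ^ n)"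
      using A_lo_pos Q_pos by (simp add: U_def R_def)
    also have "\<dots> \<le> R * \<mu>M"
      using moment_M_lower[of n] C_up_pos Q_pos A_lo_pos
      by (intro mult_left_mono) (auto simp: R_def \<mu>M_def)
    finally show ?thesis using \<mu>M by (simp add: pos_divide_le_eq mult.assoc)
  qed
  finally show ?thesis by (simp add: \<mu>M_def R_def)
qed

lemma weighted_diff2_inverse_odd_moment_ramp_le:
  "(\<Sum>s\<le>2 * M (n + N). real (s + 1) *
      \<bar>diff2 (ramp (M_prev w K n) (M (n + N)) (\<lambda>s. moment mu (M n) / odd_moment s)) s\<bar>)
    \<le> I_lower_const N"
proof -
  define \<mu>M where "\<mu>M = moment mu (M n)"
  define U where "U = (C_up / Q) * Q ^ n"
  define A where "A = A_lo / 2 * Q ^ (N + sixfold_steps)"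
  define L where "L = A * Q ^ n"
  have A: "0 < A" using A_lo_pos Q_pos by (simp add: A_def)
  have L: "0 < L" using A Q_pos by (simp add: L_def)
  have "(\<Sum>s\<le>2 * M (n + N). real (s + 1) *
      \<bar>diff2 (ramp (M_prev w K n) (M (n + N)) (\<lambda>s. \<mu>M / odd_moment s)) s\<bar>)
    \<le> \<mu>M * (5 * U / L\<^sup>2 + 4 * U\<^sup>2 / L ^ 3 + 3 / L)"
    by (rule weighted_diff2_ramp_inverse_le[OF M_prev_less odd_moment_Suc_le odd_moment_convex
          odd_moment_nonneg _ _ L])
      (use odd_moment_block_bounds odd_moment_lower[of _ n N] moment_M_pos[of n]
        in \<open>auto simp: U_def L_def A_def \<mu>M_def\<close>)
  also have "\<dots> \<le> C_up * Q ^ n * (5 * U / L\<^sup>2 + 4 * U\<^sup>2 / L ^ 3 + 3 / L)"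
    using moment_M_upper[of n] L C_up_pos Q_pos by (intro mult_right_mono) (auto simp: \<mu>M_def U_def)
  also have "\<dots> = C_up * (5 * (C_up / Q) / A\<^sup>2 + 4 * (C_up / Q)\<^sup>2 / A ^ 3 + 3 / A)"
    using A Q_pos by (simp add: U_def L_def field_simps power2_eq_square power3_eq_cube)
  finally show ?thesis by (simp add: I_lower_const_def A_def \<mu>M_def)
qed

context
  fixes X :: "(complex \<Rightarrow> complex) set" and nX :: "(complex \<Rightarrow> complex) \<Rightarrow> real"
    and C0 :: real and N n :: nat and c :: "nat \<Rightarrow> complex"
  assumes X: "admissible_banach X nX" and C0: "0 < C0" "dilation_bounded X nX C0"
    and c: "\<And>k. k < M_prev w K n \<Longrightarrow> c k = 0"
begin

lemma norm_odd_moment_multiplier_upper: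
  "nX (diskr (poly_fun (\<lambda>k. c k * of_real (odd_moment k)) (M (n + N))))
     \<le> (C0 * (8 * (C_up / Q) / (A_lo / 2 * Q ^ sixfold_steps))) * (moment mu (M n) * nX (diskr (poly_fun c (M (n + N)))))"
proof -
  define a b \<mu>M where "a = M_prev w K n" and "b = M (n + N)" and "\<mu>M = moment mu (M n)"
  define lam where "lam = ramp a b (\<lambda>s. odd_moment s / \<mu>M)"
  define nf where "nf = nX (diskr (poly_fun c b))"
  have \<mu>M: "0 < \<mu>M" unfolding \<mu>M_def by (rule moment_M_pos)
  have ab: "a < b" unfolding a_def b_def by (rule M_prev_less)
  have nf: "0 \<le> nf" unfolding nf_def by (rule admissible_norm_poly_fun_nonneg[OF X])
  have "poly_fun (\<lambda>k. of_real (odd_moment k) * c k) b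
      = poly_fun (\<lambda>j. of_real \<mu>M * (of_real (lam j) * c j)) b"
    unfolding mult.assoc[symmetric]
  proof (rule poly_fun_multiplier_cong)
    fix j assume j: "j < b" "c j \<noteq> 0"
    then have "a \<le> j" using c[of j] unfolding a_def by linarith
    then have "lam j = odd_moment j / \<mu>M" using j by (simp add: lam_def ramp_middle[OF ab])
    then show "complex_of_real (odd_moment j) = of_real \<mu>M * of_real (lam j)" using \<mu>M by simp
  qed
  then have "diskr (poly_fun (\<lambda>k. c k * of_real (odd_moment k)) b)
      = (\<lambda>z. of_real \<mu>M * diskr (poly_fun (\<lambda>j. of_real (lam j) * c j) b) z)"
    by (simp add: poly_fun_scale diskr_scale mult.commute)
  then have "nX (diskr (poly_fun (\<lambda>k. c k * of_real (odd_moment k)) b))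
      = \<mu>M * nX (diskr (poly_fun (\<lambda>j. of_real (lam j) * c j) b))"
    using admissible_norm_scale[OF X admissible_poly_fun[OF X]] \<mu>M by simp
  also have "\<dots> \<le> \<mu>M * (C0 * (\<Sum>s\<le>2 * b. real (s + 1) * \<bar>diff2 lam s\<bar>) * nf)"
    unfolding nf_def using \<mu>M
    by (intro mult_left_mono norm_multiplier_by_fejer[OF X C0(2)])
      (use ramp_hinge_expansion[OF ab] in \<open>auto simp: lam_def\<close>)
  also have "\<dots> \<le> \<mu>M * (C0 * (8 * ((C_up / Q) / (A_lo / 2 * Q ^ sixfold_steps))) * nf)"
    using weighted_diff2_odd_moment_ramp_le[of n N] \<mu>M C0 nf
    by (intro mult_left_mono mult_right_mono) (auto simp: lam_def a_def b_def \<mu>M_def)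
  finally show ?thesis by (simp add: b_def \<mu>M_def nf_def mult_ac)
qed

lemma norm_odd_moment_multiplier_lower:
  "moment mu (M n) * nX (diskr (poly_fun c (M (n + N))))
     \<le> (C0 * I_lower_const N) * nX (diskr (poly_fun (\<lambda>k. c k * of_real (odd_moment k)) (M (n + N))))"
proof -
  define a b \<mu>M where "a = M_prev w K n" and "b = M (n + N)" and "\<mu>M = moment mu (M n)"
  define lam where "lam = ramp a b (\<lambda>s. \<mu>M / odd_moment s)"
  define c' where "c' k = c k * of_real (odd_moment k)" for k
  have \<mu>M: "0 < \<mu>M" unfolding \<mu>M_def by (rule moment_M_pos)
  have ab: "a < b" unfolding a_def b_def by (rule M_prev_less)
  have nF: "0 \<le> nX (diskr (poly_fun c' b))" by (rule admissible_norm_poly_fun_nonneg[OF X])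
  have "poly_fun (\<lambda>j. of_real (lam j) * c' j) b = poly_fun (\<lambda>j. of_real \<mu>M * c j) b"
    unfolding poly_fun_def
  proof (intro ext sum.cong refl)
    fix z j assume j: "j \<in> {..<b}"
    show "of_real (lam j) * c' j * z ^ j = of_real \<mu>M * c j * z ^ j"
    proof (cases "c j = 0")
      case False
      then have "a \<le> j" using c[of j] unfolding a_def by linarith
      then have "lam j = \<mu>M / odd_moment j" using j by (simp add: lam_def ramp_middle[OF ab])
      moreover have "0 < odd_moment j"
      proof -
        have "0 < (A_lo / 2 * Q ^ (N + sixfold_steps)) * Q ^ n" using A_lo_pos Q_pos by simp
        also have "\<dots> \<le> odd_moment j" using j by (intro odd_moment_lower) (simp add: b_def)
        finally show ?thesis .
      qed
      ultimately have "lam j * odd_moment j = \<mu>M" by simp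
      then have "complex_of_real (lam j) * of_real (odd_moment j) = of_real \<mu>M"
        by (metis of_real_mult)
      then show ?thesis unfolding c'_def by (simp add: mult_ac)
    qed (simp add: c'_def)
  qed
  then have "\<mu>M * nX (diskr (poly_fun c b)) = nX (diskr (poly_fun (\<lambda>j. of_real (lam j) * c' j) b))"
    using admissible_norm_scale[OF X admissible_poly_fun[OF X]] \<mu>M
    by (simp add: poly_fun_scale diskr_scale)
  also have "\<dots> \<le> C0 * (\<Sum>s\<le>2 * b. real (s + 1) * \<bar>diff2 lam s\<bar>) * nX (diskr (poly_fun c' b))"
    by (rule norm_multiplier_by_fejer[OF X C0(2)]) (use ramp_hinge_expansion[OF ab] in \<open>auto simp: lam_def\<close>)
  also have "\<dots> \<le> C0 * I_lower_const N * nX (diskr (poly_fun c' b))"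
    using weighted_diff2_inverse_odd_moment_ramp_le[of n N] C0 nF
    by (intro mult_right_mono mult_left_mono) (auto simp: lam_def a_def b_def \<mu>M_def)
  finally show ?thesis by (simp add: b_def \<mu>M_def c'_def[abs_def])
qed

abbreviation block_norm :: real where
  "block_norm \<equiv> nX (diskr (poly_fun c (M (n + N))))"

abbreviation block_norm_I :: real where
  "block_norm_I \<equiv> nX (diskr (poly_fun (\<lambda>k. c k * of_real (odd_moment k)) (M (n + N))))"

lemma block_estimates:
  "block_norm_I \<le> block_const C0 N * (moment mu (M n) * block_norm)"
  "moment mu (M n) * block_norm \<le> block_const C0 N * block_norm_I"
  "moment mu (M n) * block_norm \<le> block_const C0 N * (K powr (- \<alpha> * real n) * block_norm)"
  "K powr (- \<alpha> * real n) * block_norm \<le> block_const C0 N * (moment mu (M n) * block_norm)"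
proof -
  have f: "0 \<le> block_norm" and F: "0 \<le> block_norm_I"
    by (rule admissible_norm_poly_fun_nonneg[OF X])+
  have \<mu>M_f: "0 \<le> moment mu (M n) * block_norm"
    using moment_M_pos[of n] f by simp
  show "block_norm_I \<le> block_const C0 N * (moment mu (M n) * block_norm)"
    by (rule le_mult_const_mono[OF norm_odd_moment_multiplier_upper \<mu>M_f block_const_ge(1)[OF C0(1)]])
  show "moment mu (M n) * block_norm \<le> block_const C0 N * block_norm_I"
    by (rule le_mult_const_mono[OF norm_odd_moment_multiplier_lower F block_const_ge(2)[OF C0(1)]])
  have "moment mu (M n) * block_norm \<le> C_up * (K powr (- \<alpha> * real n) * block_norm)"
    using mult_right_mono[OF moment_M_le_K_powr f] by (simp only: mult.assoc)
  then show "moment mu (M n) * block_norm \<le> block_const C0 N * (K powr (- \<alpha> * real n) * block_norm)"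
    by (rule le_mult_const_mono) (use f block_const_ge(3)[OF C0(1)] in simp_all)
  have "K powr (- \<alpha> * real n) * block_norm \<le> 1 / (A_lo / 2 * Q ^ sixfold_steps) * (moment mu (M n) * block_norm)"
    using mult_right_mono[OF K_powr_le_moment_M f] by (simp only: mult.assoc)
  then show "K powr (- \<alpha> * real n) * block_norm \<le> block_const C0 N * (moment mu (M n) * block_norm)"
    by (rule le_mult_const_mono[OF _ \<mu>M_f block_const_ge(4)[OF C0(1)]])
qed
end

end

theorem proposition3p2:
  fixes \<omega> :: "real \<Rightarrow> real" and N :: nat and \<alpha> K :: real
    and P :: "nat \<Rightarrow> complex poly"
    and X :: "(complex \<Rightarrow> complex) set" and nX :: "(complex \<Rightarrow> complex) \<Rightarrow> real"
  defines "\<mu> \<equiv> (\<lambda>r. \<omega> r * omega_hat \<omega> r powr (\<alpha> - 1))"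
  assumes hw: "D_hat \<omega>"
    and hN: "1 \<le> N"
    and h\<alpha>: "\<alpha> > 0"
    and hK: "K > 1"
    and hlac: "lacunary (M_seq \<omega> K)"
    and hsum: "\<forall>f. f holomorphic_on ball 0 1 \<longrightarrow>
                 (\<forall>z\<in>ball 0 1. (\<lambda>n. hadamard (P n) f z) sums f z)"
    and hsupp: "\<forall>n j. j < M_prev \<omega> K n \<or> M_seq \<omega> K (n + N) \<le> j \<longrightarrow> coeff (P n) j = 0"
    and hX: "admissible_banach X nX"
  shows "\<exists>C>0. \<forall>n g. g holomorphic_on ball 0 1 \<longrightarrow>
           diskr (hadamard (P n) g) \<in> X \<and>
           diskr (I_op \<mu> (hadamard (P n) g)) \<in> X \<and>
           nX (diskr (I_op \<mu> (hadamard (P n) g)))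
             \<le> C * (moment \<mu> (M_seq \<omega> K n) * nX (diskr (hadamard (P n) g))) \<and>
           moment \<mu> (M_seq \<omega> K n) * nX (diskr (hadamard (P n) g))
             \<le> C * nX (diskr (I_op \<mu> (hadamard (P n) g))) \<and>
           moment \<mu> (M_seq \<omega> K n) * nX (diskr (hadamard (P n) g))
             \<le> C * (K powr (- \<alpha> * real n) * nX (diskr (hadamard (P n) g))) \<and>
           K powr (- \<alpha> * real n) * nX (diskr (hadamard (P n) g))
             \<le> C * (moment \<mu> (M_seq \<omega> K n) * nX (diskr (hadamard (P n) g)))"
proof -
  interpret lacunary_weight \<omega> K \<alpha>
    using hw hK h\<alpha> hlac by unfold_locales (simp add: D_hat_def)
  obtain C0 where C0: "0 < C0" "dilation_bounded X nX C0"
    using admissible_dilation_bounded[OF hX] by blast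
  define c where "c n g = (\<lambda>k. coeff (P n) k * tcoef g k)" for n g
  have c: "k < M_prev \<omega> K n \<Longrightarrow> c n g k = 0" for n g k
    using hsupp by (simp add: c_def)
  have \<mu>: "\<mu> = mu" unfolding \<mu>_def by (rule ext) (simp add: mu_def)
  have blocks: "hadamard (P n) g = poly_fun (c n g) (M (n + N))" for n g
    unfolding c_def by (rule hadamard_eq_poly_fun) (use hsupp in simp)
  show ?thesis
    unfolding \<mu> blocks I_op_poly_fun odd_moment_def[symmetric]
    by (intro exI[of _ "block_const C0 N"] conjI allI impI block_const_ge(5)[OF C0(1)]
        admissible_poly_fun[OF hX] block_estimates[OF hX C0 c])
qed

end
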